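(* Let $\varphi$ be a Musielak–Orlicz function. Then for every $r\in(0,1]$, $P_\varphi(\Omega)=H^{\varphi,\infty,M}_{\mathrm{at},r}(\Omega)$ and $Q_\varphi(\Omega)=H^{\varphi,\infty,S}_{\mathrm{at},r}(\Omega)$ with equivalent quasi-norms.
   Context: Let $(\Omega,\mathcal F,\mathbb P)$ be a probability space, $(\mathcal F_n)_{n\in\mathbb Z_+}$ a nondecreasing sequence of sub-$\sigma$-algebras, $\mathbb E_n$ the conditional expectations. A Musielak–Orlicz function is $\varphi:\Omega\times[0,\infty)\to[0,\infty)$ with $\varphi(x,\cdot)$ nondecreasing, $\varphi(x,0)=0$, $\lim_{t\to\infty}\varphi(x,t)=\infty$ for each $x$, $\varphi(\cdot,t)$ measurable for each $t$; $\|f\|_{L^\varphi(\Omega)}:=\inf\{\lambda>0:\int_\Omega\varphi(x,|f|/\lambda)\,d\mathbb P\le1\}$. $\mathcal M$ is the set of martingales $f=(f_n)_{n\in\mathbb Z_+}$ with $f_0=0$; $d_nf:=f_n-f_{n-1}$, $S_n(f):=(\sum_{i=1}^n|d_if|^2)^{1/2}$, $S(f):=(\sum_{i\ge1}|d_if|^2)^{1/2}$, and for a function or martingale $M(a):=\sup_n|\mathbb E_na|$ (resp. $\sup_n|f_n|$). $\Lambda$ is the set of nondecreasing nonnegative adapted sequences $(\lambda_n)_{n\in\mathbb Z_+}$, $\lambda_\infty:=\lim_n\lambda_n$. $\|f\|_{P_\varphi}:=\inf\|\lambda_\infty\|_{L^\varphi}$ over $(\lambda_n)\in\Lambda$ with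 $|f_n|\le\lambda_{n-1}$ for all $n\ge1$; $\|f\|_{Q_\varphi}:=\inf\|\lambda_\infty\|_{L^\varphi}$ over $(\lambda_n)\in\Lambda$ with $S_n(f)\le\lambda_{n-1}$ for all $n\ge1$; $P_\varphi(\Omega)$, $Q_\varphi(\Omega)$ are the sets of $f\in\mathcal M$ with finite quasi-norm. For a stopping time $\nu$, $B_\nu:=\{\nu<\infty\}$. For $T\in\{S,M\}$, a measurable $a$ is a $(\varphi,\infty)_T$-atom if there is a stopping time $\nu$ with (i) $\mathbb E_na=0$ whenever $\nu\ge n$, (ii) $\|T(a)\|_{L^\infty(B_\nu)}\le\|\mathbf 1_{B_\nu}\|_{L^\varphi(\Omega)}^{-1}$ (where $S(a)$, $M(a)$ are computed for the martingale $(\mathbb E_na)_n$). For $r>0$, $H^{\varphi,\infty,T}_{\mathrm{at},r}(\Omega)$ is the set of $f\in\mathcal M$ for which there exist $\mu^k\ge0$ and $(\varphi,\infty)_T$-atoms $a^k$ with stopping times $\nu^k$ ($k\in\mathbb Z$) such that $f_n=\sum_k\mu^k\mathbb E_na^k$ for all $n$ and $\|\{\sum_k[\mu^k\mathbf 1_{B_{\nu^k}}/\|\mathbf 1_{B_{\nu^k}}\|_{L^\varphi}]^r\}^{1/r}\|_{L^\varphi(\Omega)}<\infty$; its quasi-norm is the infimum of this quantity over all such decompositions. *)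

theory Defs
  imports "HOL-Probability.Probability"
begin

definition is_filtration :: "'a measure \<Rightarrow> (nat \<Rightarrow> 'a measure) \<Rightarrow> bool" where
  "is_filtration M F \<longleftrightarrow> (\<forall>n. subalgebra M (F n)) \<and> (\<forall>n. sets (F n) \<subseteq> sets (F (Suc n)))"

definition condE :: "'a measure \<Rightarrow> (nat \<Rightarrow> 'a measure) \<Rightarrow> nat \<Rightarrow> ('a \<Rightarrow> real) \<Rightarrow> 'a \<Rightarrow> real" where
  "condE M F n a = real_cond_exp M (F n) a"

definition martingales :: "'a measure \<Rightarrow> (nat \<Rightarrow> 'a measure) \<Rightarrow> (nat \<Rightarrow> 'a \<Rightarrow> real) set" where
  "martingales M F = {f. (AE x in M. f 0 x = 0) \<and>
      (\<forall>n. f n \<in> borel_measurable (F n) \<and> integrable M (f n)) \<and>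
      (\<forall>n. AE x in M. condE M F n (f (Suc n)) x = f n x)}"

definition is_stopping_time :: "'a measure \<Rightarrow> (nat \<Rightarrow> 'a measure) \<Rightarrow> ('a \<Rightarrow> enat) \<Rightarrow> bool" where
  "is_stopping_time M F \<nu> \<longleftrightarrow> (\<forall>n::nat. {x \<in> space M. \<nu> x \<le> enat n} \<in> sets (F n))"

definition B_set :: "'a measure \<Rightarrow> ('a \<Rightarrow> enat) \<Rightarrow> 'a set" where
  "B_set M \<nu> = {x \<in> space M. \<nu> x < \<infinity>}"

definition musielak_orlicz :: "'a measure \<Rightarrow> ('a \<Rightarrow> real \<Rightarrow> real) \<Rightarrow> bool" where
  "musielak_orlicz M \<phi> \<longleftrightarrow>
     (\<forall>x\<in>space M. mono_on {0..} (\<phi> x) \<and> \<phi> x 0 = 0 \<and> (\<forall>t\<ge>0. \<phi> x t \<ge> 0)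
        \<and> filterlim (\<phi> x) at_top at_top)
   \<and> (\<forall>t\<ge>0. (\<lambda>x. \<phi> x t) \<in> borel_measurable M)"

definition phi_ext :: "('a \<Rightarrow> real \<Rightarrow> real) \<Rightarrow> 'a \<Rightarrow> ennreal \<Rightarrow> ennreal" where
  "phi_ext \<phi> x t = (if t = \<infinity> then \<infinity> else ennreal (\<phi> x (enn2real t)))"

text \<open>Luxemburg quasi-norm of a nonnegative (possibly infinite) function; Inf {} = infinity.\<close>
definition mo_norm :: "'a measure \<Rightarrow> ('a \<Rightarrow> real \<Rightarrow> real) \<Rightarrow> ('a \<Rightarrow> ennreal) \<Rightarrow> ennreal" where
  "mo_norm M \<phi> g = Inf {ennreal l | l. l > 0 \<and> (\<integral>\<^sup>+ x. phi_ext \<phi> x (g x / ennreal l) \<partial>M) \<le> 1}"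

definition epow :: "ennreal \<Rightarrow> real \<Rightarrow> ennreal" where
  "epow t p = (if t = \<infinity> then \<infinity> else ennreal (enn2real t powr p))"

definition sqfun_n :: "(nat \<Rightarrow> 'a \<Rightarrow> real) \<Rightarrow> nat \<Rightarrow> 'a \<Rightarrow> real" where
  "sqfun_n f n x = sqrt (\<Sum>i\<in>{1..n}. (f i x - f (i - 1) x)\<^sup>2)"

definition S_atom :: "'a measure \<Rightarrow> (nat \<Rightarrow> 'a measure) \<Rightarrow> ('a \<Rightarrow> real) \<Rightarrow> 'a \<Rightarrow> ennreal" where
  "S_atom M F a x = epow (\<Sum>i. ennreal ((condE M F (Suc i) a x - condE M F i a x)\<^sup>2)) (1/2)"

definition M_atom :: "'a measure \<Rightarrow> (nat \<Rightarrow> 'a measure) \<Rightarrow> ('a \<Rightarrow> real) \<Rightarrow> 'a \<Rightarrow> ennreal" where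
  "M_atom M F a x = (SUP n. ennreal \<bar>condE M F n a x\<bar>)"

definition Lambda :: "'a measure \<Rightarrow> (nat \<Rightarrow> 'a measure) \<Rightarrow> (nat \<Rightarrow> 'a \<Rightarrow> real) set" where
  "Lambda M F = {lam. \<forall>n. lam n \<in> borel_measurable (F n) \<and>
       (\<forall>x\<in>space M. 0 \<le> lam n x \<and> lam n x \<le> lam (Suc n) x)}"

definition lam_inf :: "(nat \<Rightarrow> 'a \<Rightarrow> real) \<Rightarrow> 'a \<Rightarrow> ennreal" where
  "lam_inf lam x = (SUP n. ennreal (lam n x))"

definition P_norm :: "'a measure \<Rightarrow> (nat \<Rightarrow> 'a measure) \<Rightarrow> ('a \<Rightarrow> real \<Rightarrow> real) \<Rightarrow> (nat \<Rightarrow> 'a \<Rightarrow> real) \<Rightarrow> ennreal" where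
  "P_norm M F \<phi> f = Inf {mo_norm M \<phi> (lam_inf lam) | lam. lam \<in> Lambda M F \<and>
       (\<forall>n\<ge>1. AE x in M. \<bar>f n x\<bar> \<le> lam (n - 1) x)}"

definition Q_norm :: "'a measure \<Rightarrow> (nat \<Rightarrow> 'a measure) \<Rightarrow> ('a \<Rightarrow> real \<Rightarrow> real) \<Rightarrow> (nat \<Rightarrow> 'a \<Rightarrow> real) \<Rightarrow> ennreal" where
  "Q_norm M F \<phi> f = Inf {mo_norm M \<phi> (lam_inf lam) | lam. lam \<in> Lambda M F \<and>
       (\<forall>n\<ge>1. AE x in M. sqfun_n f n x \<le> lam (n - 1) x)}"

definition P_space :: "'a measure \<Rightarrow> (nat \<Rightarrow> 'a measure) \<Rightarrow> ('a \<Rightarrow> real \<Rightarrow> real) \<Rightarrow> (nat \<Rightarrow> 'a \<Rightarrow> real) set" where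
  "P_space M F \<phi> = {f \<in> martingales M F. P_norm M F \<phi> f < \<infinity>}"

definition Q_space :: "'a measure \<Rightarrow> (nat \<Rightarrow> 'a measure) \<Rightarrow> ('a \<Rightarrow> real \<Rightarrow> real) \<Rightarrow> (nat \<Rightarrow> 'a \<Rightarrow> real) set" where
  "Q_space M F \<phi> = {f \<in> martingales M F. Q_norm M F \<phi> f < \<infinity>}"

text \<open>(phi,infinity)_T-atom with stopping time nu; T is S_atom or M_atom.
  Measurable a is taken integrable so that E_n a makes sense.\<close>
definition is_atom :: "'a measure \<Rightarrow> (nat \<Rightarrow> 'a measure) \<Rightarrow> ('a \<Rightarrow> real \<Rightarrow> real)
    \<Rightarrow> (('a \<Rightarrow> real) \<Rightarrow> 'a \<Rightarrow> ennreal) \<Rightarrow> ('a \<Rightarrow> real) \<Rightarrow> ('a \<Rightarrow> enat) \<Rightarrow> bool" where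
  "is_atom M F \<phi> T a \<nu> \<longleftrightarrow> integrable M a \<and> is_stopping_time M F \<nu> \<and>
     (\<forall>n::nat. AE x in M. enat n \<le> \<nu> x \<longrightarrow> condE M F n a x = 0) \<and>
     (AE x in M. x \<in> B_set M \<nu> \<longrightarrow>
        T a x \<le> inverse (mo_norm M \<phi> (indicator (B_set M \<nu>))))"

definition atomic_decomp :: "'a measure \<Rightarrow> (nat \<Rightarrow> 'a measure) \<Rightarrow> ('a \<Rightarrow> real \<Rightarrow> real)
    \<Rightarrow> (('a \<Rightarrow> real) \<Rightarrow> 'a \<Rightarrow> ennreal) \<Rightarrow> (nat \<Rightarrow> 'a \<Rightarrow> real)
    \<Rightarrow> (int \<Rightarrow> real) \<Rightarrow> (int \<Rightarrow> 'a \<Rightarrow> real) \<Rightarrow> (int \<Rightarrow> 'a \<Rightarrow> enat) \<Rightarrow> bool" where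
  "atomic_decomp M F \<phi> T f \<mu> a \<nu> \<longleftrightarrow>
     (\<forall>k. 0 \<le> \<mu> k \<and> is_atom M F \<phi> T (a k) (\<nu> k)) \<and>
     (\<forall>n. AE x in M. ((\<lambda>k. \<mu> k * condE M F n (a k) x) has_sum f n x) UNIV)"

definition atomic_size :: "'a measure \<Rightarrow> ('a \<Rightarrow> real \<Rightarrow> real) \<Rightarrow> real
    \<Rightarrow> (int \<Rightarrow> real) \<Rightarrow> (int \<Rightarrow> 'a \<Rightarrow> enat) \<Rightarrow> ennreal" where
  "atomic_size M \<phi> r \<mu> \<nu> = mo_norm M \<phi> (\<lambda>x. epow (\<Sum>\<^sub>\<infinity>k. epow
       (ennreal (\<mu> k) * indicator (B_set M (\<nu> k)) x * inverse (mo_norm M \<phi> (indicator (B_set M (\<nu> k))))) r) (1 / r))"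

definition Hat_norm :: "'a measure \<Rightarrow> (nat \<Rightarrow> 'a measure) \<Rightarrow> ('a \<Rightarrow> real \<Rightarrow> real)
    \<Rightarrow> (('a \<Rightarrow> real) \<Rightarrow> 'a \<Rightarrow> ennreal) \<Rightarrow> real \<Rightarrow> (nat \<Rightarrow> 'a \<Rightarrow> real) \<Rightarrow> ennreal" where
  "Hat_norm M F \<phi> T r f = Inf {atomic_size M \<phi> r \<mu> \<nu> | \<mu> a \<nu>. atomic_decomp M F \<phi> T f \<mu> a \<nu>}"

definition Hat_space :: "'a measure \<Rightarrow> (nat \<Rightarrow> 'a measure) \<Rightarrow> ('a \<Rightarrow> real \<Rightarrow> real)
    \<Rightarrow> (('a \<Rightarrow> real) \<Rightarrow> 'a \<Rightarrow> ennreal) \<Rightarrow> real \<Rightarrow> (nat \<Rightarrow> 'a \<Rightarrow> real) set" where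
  "Hat_space M F \<phi> T r = {f \<in> martingales M F. Hat_norm M F \<phi> T r f < \<infinity>}"

end

theory Submission
  imports Defs
begin

text \<open>Let \<open>\<lambda> \<in> \<Lambda>\<close> control \<open>f\<close>, i.e. \<open>|f\<^sub>n| \<le> \<lambda>\<^sub>n\<^sub>-\<^sub>1\<close> (resp. \<open>S\<^sub>n(f) \<le> \<lambda>\<^sub>n\<^sub>-\<^sub>1\<close>), and let
  \<open>\<nu>\<^sub>k\<close> be the first time \<open>\<lambda>\<close> exceeds \<open>2\<^sup>k\<close>. Keeping for each \<open>k \<in> \<int>\<close> only the increments
  \<open>d\<^sub>if\<close> with \<open>\<nu>\<^sub>k < i \<le> \<nu>\<^sub>k\<^sub>+\<^sub>1\<close> splits \<open>f\<close> into martingales that vanish up to \<open>\<nu>\<^sub>k\<close> and are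
  bounded by \<open>3\<cdot>2\<^sup>k\<close> in \<open>M\<close> (resp. in \<open>S\<close>). Being bounded in \<open>L\<^sup>2\<close>, each of them is closed by an
  integrable function, which divided by \<open>\<mu>\<^sub>k = 3\<cdot>2\<^sup>k \<parallel>\<one>\<^bsub>B(\<nu>\<^sub>k)\<^esub>\<parallel>\<close> is an atom. Since
  \<open>B(\<nu>\<^sub>k) = {\<lambda>\<^sub>\<infinity> > 2\<^sup>k}\<close>, the \<open>\<ell>\<^sup>r\<close>-sum of the normalised coefficients is a geometric sum
  bounded by \<open>C\<^sub>r \<lambda>\<^sub>\<infinity>\<close>.

  Conversely, given an atomic decomposition, \<open>\<Sum>\<^sub>k \<mu>\<^sup>k \<one>\<^bsub>{\<nu>\<^sup>k \<le> n-1}\<^esub> / \<parallel>\<one>\<^bsub>B(\<nu>\<^sup>k)\<^esub>\<parallel>\<close> is a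
  predictable control of \<open>|f\<^sub>n|\<close> (resp. of \<open>S\<^sub>n(f)\<close>, by Minkowski's inequality): the atoms with
  \<open>\<nu>\<^sup>k \<ge> n\<close> do not contribute to \<open>f\<^sub>n\<close>. It increases to the \<open>\<ell>\<^sup>1\<close>-sum of the normalised
  coefficients, which is at most their \<open>\<ell>\<^sup>r\<close>-sum because \<open>r \<le> 1\<close>.\<close>

section \<open>The Musielak--Orlicz quasi-norm\<close>

lemma phi_ext_mono:
  assumes "musielak_orlicz M \<phi>" "x \<in> space M" "t \<le> s"
  shows "phi_ext \<phi> x t \<le> phi_ext \<phi> x s"
proof (cases "s = \<infinity>")
  case True then show ?thesis by (simp add: phi_ext_def)
next
  case False
  then have "t \<noteq> \<infinity>" using assms(3) by (auto simp: top_unique)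
  then have "enn2real t \<le> enn2real s" using assms(3) False by (intro enn2real_mono) (auto simp: top.not_eq_extremum)
  moreover have "mono_on {0..} (\<phi> x)" using assms unfolding musielak_orlicz_def by auto
  ultimately have "\<phi> x (enn2real t) \<le> \<phi> x (enn2real s)"
    by (auto intro: mono_onD)
  then show ?thesis using False \<open>t \<noteq> \<infinity>\<close> by (simp add: phi_ext_def ennreal_leI)
qed

lemma mo_norm_mono_AE:
  assumes "musielak_orlicz M \<phi>" "AE x in M. g x \<le> h x"
  shows "mo_norm M \<phi> g \<le> mo_norm M \<phi> h"
  unfolding mo_norm_def
proof (rule Inf_superset_mono, safe)
  fix l :: real assume l: "l > 0" "(\<integral>\<^sup>+ x. phi_ext \<phi> x (h x / ennreal l) \<partial>M) \<le> 1"
  have "(\<integral>\<^sup>+ x. phi_ext \<phi> x (g x / ennreal l) \<partial>M) \<le> (\<integral>\<^sup>+ x. phi_ext \<phi> x (h x / ennreal l) \<partial>M)"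
    using assms(2) AE_space
    by (intro nn_integral_mono_AE, eventually_elim) (auto intro!: phi_ext_mono[OF assms(1)] divide_right_mono_ennreal)
  with l show "\<exists>la. ennreal l = ennreal la \<and> 0 < la \<and> (\<integral>\<^sup>+ x. phi_ext \<phi> x (g x / ennreal la) \<partial>M) \<le> 1"
    by auto
qed

lemma ennreal_mult_Inf_image:
  fixes c :: real assumes "c > 0"
  shows "Inf ((\<lambda>y. ennreal c * y) ` S) = ennreal c * Inf S"
proof (rule antisym)
  have "ennreal (1/c) * Inf ((\<lambda>y. ennreal c * y) ` S) \<le> Inf S"
  proof (rule Inf_greatest)
    fix s assume "s \<in> S"
    then have "Inf ((\<lambda>y. ennreal c * y) ` S) \<le> ennreal c * s" by (auto intro: Inf_lower)
    then have "ennreal (1/c) * Inf ((\<lambda>y. ennreal c * y) ` S) \<le> ennreal (1/c) * (ennreal c * s)"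
      by (rule mult_left_mono) simp
    also have "\<dots> = s" using assms by (simp flip: mult.assoc ennreal_mult)
    finally show "ennreal (1/c) * Inf ((\<lambda>y. ennreal c * y) ` S) \<le> s" .
  qed
  then have "ennreal c * (ennreal (1/c) * Inf ((\<lambda>y. ennreal c * y) ` S)) \<le> ennreal c * Inf S"
    by (rule mult_left_mono) simp
  then show "Inf ((\<lambda>y. ennreal c * y) ` S) \<le> ennreal c * Inf S"
    using assms by (simp flip: mult.assoc ennreal_mult)
next
  show "ennreal c * Inf S \<le> Inf ((\<lambda>y. ennreal c * y) ` S)"
    by (rule Inf_greatest) (auto intro: mult_left_mono Inf_lower)
qed

lemma mo_norm_cmult:
  assumes "c > 0"
  shows "mo_norm M \<phi> (\<lambda>x. ennreal c * g x) = ennreal c * mo_norm M \<phi> g"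
proof -
  have eq: "(ennreal c * t) / ennreal (c * l) = t / ennreal l" if "l > 0" for t l
  proof -
    have "(ennreal c * t) / ennreal (c * l) = ennreal c * t * (inverse (ennreal c) * inverse (ennreal l))"
      using assms that by (simp add: divide_ennreal_def ennreal_mult ennreal_inverse_mult)
    also have "\<dots> = (ennreal c * inverse (ennreal c)) * (t * inverse (ennreal l))"
      by (simp add: ac_simps)
    also have "ennreal c * inverse (ennreal c) = 1" using assms by (simp add: ennreal_inverse_positive ennreal_mult[symmetric] inverse_ennreal)
    finally show ?thesis by (simp add: divide_ennreal_def)
  qed
  have "{ennreal l | l. l > 0 \<and> (\<integral>\<^sup>+ x. phi_ext \<phi> x (ennreal c * g x / ennreal l) \<partial>M) \<le> 1}
     = (\<lambda>y. ennreal c * y) ` {ennreal l | l. l > 0 \<and> (\<integral>\<^sup>+ x. phi_ext \<phi> x (g x / ennreal l) \<partial>M) \<le> 1}"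
  proof (safe)
    fix l :: real assume l: "l > 0" "(\<integral>\<^sup>+ x. phi_ext \<phi> x (ennreal c * g x / ennreal l) \<partial>M) \<le> 1"
    have "l / c > 0" using l assms by simp
    moreover have "ennreal c * g x / ennreal l = g x / ennreal (l / c)" for x
      using eq[of "l/c" "g x"] \<open>l / c > 0\<close> assms by simp
    ultimately show "ennreal l \<in> (\<lambda>y. ennreal c * y) ` {ennreal l | l. l > 0 \<and> (\<integral>\<^sup>+ x. phi_ext \<phi> x (g x / ennreal l) \<partial>M) \<le> 1}"
      using l assms by (intro image_eqI[of _ _ "ennreal (l/c)"]) (auto simp: ennreal_mult[symmetric])
  next
    fix l :: real assume l: "l > 0" "(\<integral>\<^sup>+ x. phi_ext \<phi> x (g x / ennreal l) \<partial>M) \<le> 1"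
    then show "\<exists>la. ennreal c * ennreal l = ennreal la \<and> 0 < la \<and> (\<integral>\<^sup>+ x. phi_ext \<phi> x (ennreal c * g x / ennreal la) \<partial>M) \<le> 1"
      using assms eq by (intro exI[of _ "c * l"]) (auto simp: ennreal_mult)
  qed
  then show ?thesis unfolding mo_norm_def
    using assms by (simp add: ennreal_mult_Inf_image)
qed

lemma nn_integral_phi_indicator_le_1:
  assumes MO: "musielak_orlicz M \<phi>" and z: "mo_norm M \<phi> (indicator B) = 0" and t: "t \<ge> 0"
  shows "(\<integral>\<^sup>+ x. ennreal (\<phi> x t) * indicator B x \<partial>M) \<le> 1"
proof -
  have "mo_norm M \<phi> (indicator B) < ennreal (1 / (t + 1))" using z t by simp
  then obtain s where s: "s \<in> {ennreal l | l. l > 0 \<and> (\<integral>\<^sup>+ x. phi_ext \<phi> x (indicator B x / ennreal l) \<partial>M) \<le> 1}"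
    "s < ennreal (1 / (t + 1))"
    unfolding mo_norm_def by (auto simp: Inf_less_iff)
  then obtain l where l: "s = ennreal l" "l > 0" "(\<integral>\<^sup>+ x. phi_ext \<phi> x (indicator B x / ennreal l) \<partial>M) \<le> 1"
    by auto
  have "l < 1 / (t + 1)" using s(2) l t by (simp add: ennreal_less_iff)
  then have tl: "t \<le> 1 / l" using l t by (simp add: field_simps)
  have "(\<integral>\<^sup>+ x. ennreal (\<phi> x t) * indicator B x \<partial>M) \<le> (\<integral>\<^sup>+ x. phi_ext \<phi> x (indicator B x / ennreal l) \<partial>M)"
  proof (rule nn_integral_mono)
    fix x assume x: "x \<in> space M"
    show "ennreal (\<phi> x t) * indicator B x \<le> phi_ext \<phi> x (indicator B x / ennreal l)"
    proof (cases "x \<in> B")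
      case True
      have mo: "mono_on {0..} (\<phi> x)" using MO x unfolding musielak_orlicz_def by auto
      have "\<phi> x t \<le> \<phi> x (1 / l)" using tl t l by (intro mono_onD[OF mo]) auto
      moreover have "indicator B x / ennreal l = ennreal (1 / l)" using True l by (simp add: divide_ennreal[symmetric])
      ultimately show ?thesis using True l by (simp add: phi_ext_def ennreal_leI)
    qed simp
  qed
  with l show ?thesis by simp
qed

lemma emeasure_eq_0_if_mo_norm_indicator_eq_0:
  assumes MO: "musielak_orlicz M \<phi>" and B[measurable]: "B \<in> sets M"
    and z: "mo_norm M \<phi> (indicator B) = 0"
  shows "emeasure M B = 0"
proof -
  have phi[measurable]: "(\<lambda>x. \<phi> x (real m)) \<in> borel_measurable M" for m :: nat
    using MO unfolding musielak_orlicz_def by auto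
  have mono: "mono_on {0..} (\<phi> x)" and lim: "filterlim (\<phi> x) at_top at_top" if "x \<in> space M" for x
    using MO that unfolding musielak_orlicz_def by auto
  have "(SUP m. ennreal (\<phi> x (real m)) * indicator B x) = \<top> * indicator B x" if x: "x \<in> space M" for x
  proof (cases "x \<in> B")
    case True
    have unbounded: "\<exists>m. ennreal y < ennreal (\<phi> x (real m))" for y
    proof -
      obtain t0 where t0: "\<And>t. t \<ge> t0 \<Longrightarrow> max y 0 + 1 \<le> \<phi> x t"
        using lim[OF x] unfolding filterlim_at_top eventually_at_top_linorder by blast
      obtain m :: nat where "t0 \<le> real m" using real_arch_simple by blast
      then have "max y 0 < \<phi> x (real m)" using t0[of "real m"] by linarith
      then show ?thesis by (intro exI[of _ m]) (simp add: ennreal_lessI)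
    qed
    have "(SUP m. ennreal (\<phi> x (real m))) = \<top>"
    proof (unfold SUP_eq_top_iff, intro allI impI)
      fix z :: ennreal assume "z < \<top>"
      then obtain y where "z = ennreal y" by (cases z) auto
      then show "\<exists>m\<in>UNIV. z < ennreal (\<phi> x (real m))" using unbounded[of y] by auto
    qed
    then show ?thesis using True by simp
  qed simp
  then have "(\<integral>\<^sup>+ x. (SUP m. ennreal (\<phi> x (real m)) * indicator B x) \<partial>M) = (\<integral>\<^sup>+ x. \<top> * indicator B x \<partial>M)"
    by (intro nn_integral_cong)
  then have "\<top> * emeasure M B = (\<integral>\<^sup>+ x. (SUP m. ennreal (\<phi> x (real m)) * indicator B x) \<partial>M)"
    using nn_integral_cmult_indicator[OF B, of \<top>] by simp
  also have "\<dots> = (SUP m. \<integral>\<^sup>+ x. ennreal (\<phi> x (real m)) * indicator B x \<partial>M)"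
  proof (rule nn_integral_monotone_convergence_SUP)
    show "incseq (\<lambda>m x. ennreal (\<phi> x (real m)) * indicator B x)"
    proof (intro incseq_SucI le_funI)
      fix m x
      show "ennreal (\<phi> x (real m)) * indicator B x \<le> ennreal (\<phi> x (real (Suc m))) * indicator B x"
      proof (cases "x \<in> B")
        case True
        then have "x \<in> space M" using sets.sets_into_space[OF B] by auto
        then have "\<phi> x (real m) \<le> \<phi> x (real (Suc m))" by (intro mono_onD[OF mono]) auto
        then show ?thesis using True by (simp add: ennreal_leI)
      qed simp
    qed
  qed measurable
  also have "\<dots> \<le> 1" by (intro SUP_least nn_integral_phi_indicator_le_1[OF MO z]) simp
  finally show ?thesis by (cases "emeasure M B = 0") (auto simp: ennreal_top_mult top_unique)
qed

lemma AE_finite_if_mo_norm_finite: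
  assumes g[measurable]: "g \<in> borel_measurable M" and fin: "mo_norm M \<phi> g < \<top>"
  shows "AE x in M. g x \<noteq> \<top>"
proof -
  obtain l where l: "l > 0" "(\<integral>\<^sup>+ x. phi_ext \<phi> x (g x / ennreal l) \<partial>M) \<le> 1"
    using fin unfolding mo_norm_def by (auto simp: Inf_less_iff)
  define Z where "Z = {x\<in>space M. g x = \<top>}"
  have Z[measurable]: "Z \<in> sets M" unfolding Z_def by measurable
  have "\<top> * emeasure M Z = (\<integral>\<^sup>+ x. \<top> * indicator Z x \<partial>M)"
    by (rule nn_integral_cmult_indicator[symmetric]) (rule Z)
  also have "\<dots> \<le> (\<integral>\<^sup>+ x. phi_ext \<phi> x (g x / ennreal l) \<partial>M)"
    by (rule nn_integral_mono) (auto simp: Z_def phi_ext_def ennreal_top_divide indicator_def)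
  also have "\<dots> \<le> 1" by (rule l(2))
  finally have "emeasure M Z = 0"
    by (cases "emeasure M Z = 0") (auto simp: ennreal_top_mult top_unique)
  then show ?thesis unfolding Z_def by (subst AE_iff_measurable[OF Z[unfolded Z_def]]) auto
qed

section \<open>Filtrations and conditional expectations\<close>

lemma subalgebra_filtration: "is_filtration M F \<Longrightarrow> subalgebra M (F n)"
  unfolding is_filtration_def by auto

lemma sets_filtration_mono: assumes "is_filtration M F" "n \<le> m" shows "sets (F n) \<subseteq> sets (F m)"
  using assms(2)
proof (induction m rule: dec_induct)
  case (step m) then show ?case using assms(1) unfolding is_filtration_def by blast
qed simp

lemma subalgebra_filtration_mono: assumes "is_filtration M F" "n \<le> m" shows "subalgebra (F m) (F n)"
  using sets_filtration_mono[OF assms] subalgebra_filtration[OF assms(1), of n] subalgebra_filtration[OF assms(1), of m]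
  unfolding subalgebra_def by auto

lemma measurable_filtration_mono: assumes "is_filtration M F" "n \<le> m" "f \<in> borel_measurable (F n)"
  shows "f \<in> borel_measurable (F m)"
  using measurable_from_subalg[OF subalgebra_filtration_mono[OF assms(1,2)] assms(3)] .

lemma measurable_filtration_M: assumes "is_filtration M F" "f \<in> borel_measurable (F n)"
  shows "f \<in> borel_measurable M"
  using measurable_from_subalg[OF subalgebra_filtration[OF assms(1)] assms(2)] .

lemma sets_filtration_M: assumes "is_filtration M F" "A \<in> sets (F n)" shows "A \<in> sets M"
  using assms subalgebra_filtration[OF assms(1), of n] unfolding subalgebra_def by auto

lemma space_filtration: assumes "is_filtration M F" shows "space (F n) = space M"
  using subalgebra_filtration[OF assms] unfolding subalgebra_def by auto

lemma sigma_finite_subalgebra_filtration: assumes "prob_space M" "is_filtration M F" shows "sigma_finite_subalgebra M (F n)"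
proof -
  interpret prob_space M by fact
  have "finite_measure_subalgebra M (F n)"
    by unfold_locales (rule subalgebra_filtration[OF assms(2)])
  then show ?thesis by (rule finite_measure_subalgebra_is_sigma_finite)
qed

lemma condE_nested:
  assumes "prob_space M" "is_filtration M F" "integrable M h" "n \<le> m"
  shows "AE x in M. condE M F n (condE M F m h) x = condE M F n h x"
proof -
  interpret sigma_finite_subalgebra M "F n" by (rule sigma_finite_subalgebra_filtration[OF assms(1,2)])
  show ?thesis unfolding condE_def
    by (rule real_cond_exp_nested_subalg[OF subalgebra_filtration[OF assms(2)] subalgebra_filtration_mono[OF assms(2,4)] assms(3)])
qed

lemma condE_measurable[measurable]:
  assumes "prob_space M" "is_filtration M F"
  shows "condE M F n h \<in> borel_measurable (F n)" "condE M F n h \<in> borel_measurable M"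
proof -
  interpret sigma_finite_subalgebra M "F n" by (rule sigma_finite_subalgebra_filtration[OF assms(1,2)])
  show "condE M F n h \<in> borel_measurable (F n)" "condE M F n h \<in> borel_measurable M"
    unfolding condE_def by auto
qed

lemma condE_cong:
  assumes "prob_space M" "is_filtration M F" "AE x in M. f x = g x" "f \<in> borel_measurable M" "g \<in> borel_measurable M"
  shows "AE x in M. condE M F n f x = condE M F n g x"
proof -
  interpret sigma_finite_subalgebra M "F n" by (rule sigma_finite_subalgebra_filtration[OF assms(1,2)])
  show ?thesis unfolding condE_def by (rule real_cond_exp_cong[OF assms(3-5)])
qed

lemma condE_F_measurable:
  assumes "prob_space M" "is_filtration M F" "integrable M f" "f \<in> borel_measurable (F n)"
  shows "AE x in M. condE M F n f x = f x"
proof -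
  interpret sigma_finite_subalgebra M "F n" by (rule sigma_finite_subalgebra_filtration[OF assms(1,2)])
  show ?thesis unfolding condE_def by (rule real_cond_exp_F_meas[OF assms(3,4)])
qed

lemma condE_diff:
  assumes "prob_space M" "is_filtration M F" "integrable M f" "integrable M g"
  shows "AE x in M. condE M F n (\<lambda>x. f x - g x) x = condE M F n f x - condE M F n g x"
proof -
  interpret sigma_finite_subalgebra M "F n" by (rule sigma_finite_subalgebra_filtration[OF assms(1,2)])
  show ?thesis unfolding condE_def by (rule real_cond_exp_diff[OF assms(3,4)])
qed

lemma condE_add:
  assumes "prob_space M" "is_filtration M F" "integrable M f" "integrable M g"
  shows "AE x in M. condE M F n (\<lambda>x. f x + g x) x = condE M F n f x + condE M F n g x"
proof -
  interpret sigma_finite_subalgebra M "F n" by (rule sigma_finite_subalgebra_filtration[OF assms(1,2)])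
  show ?thesis unfolding condE_def by (rule real_cond_exp_add[OF assms(3,4)])
qed

lemma condE_cdiv:
  assumes "prob_space M" "is_filtration M F" "integrable M f"
  shows "AE x in M. condE M F n (\<lambda>x. f x / c) x = condE M F n f x / c"
proof -
  interpret sigma_finite_subalgebra M "F n" by (rule sigma_finite_subalgebra_filtration[OF assms(1,2)])
  show ?thesis unfolding condE_def by (rule real_cond_exp_cdiv[OF assms(3)])
qed

lemma condE_mult:
  assumes "prob_space M" "is_filtration M F" "f \<in> borel_measurable (F n)" "g \<in> borel_measurable M"
    "integrable M (\<lambda>x. f x * g x)"
  shows "AE x in M. condE M F n (\<lambda>x. f x * g x) x = f x * condE M F n g x"
proof -
  interpret sigma_finite_subalgebra M "F n" by (rule sigma_finite_subalgebra_filtration[OF assms(1,2)])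
  show ?thesis unfolding condE_def by (rule real_cond_exp_mult[OF assms(3-5)])
qed

lemma integral_mult_condE:
  assumes "prob_space M" "is_filtration M F" "integrable M (\<lambda>x. f x * g x)"
    "f \<in> borel_measurable (F n)" "g \<in> borel_measurable M"
  shows "(\<integral> x. f x * condE M F n g x \<partial>M) = (\<integral> x. f x * g x \<partial>M)"
proof -
  interpret sigma_finite_subalgebra M "F n" by (rule sigma_finite_subalgebra_filtration[OF assms(1,2)])
  show ?thesis unfolding condE_def by (rule real_cond_exp_intg(2)[OF assms(3-5)])
qed

lemma nn_integral_abs_condE_le:
  assumes "prob_space M" "is_filtration M F" "integrable M f"
  shows "(\<integral>\<^sup>+ x. ennreal \<bar>condE M F n f x\<bar> \<partial>M) \<le> (\<integral>\<^sup>+ x. ennreal \<bar>f x\<bar> \<partial>M)"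
proof -
  interpret sigma_finite_subalgebra M "F n" by (rule sigma_finite_subalgebra_filtration[OF assms(1,2)])
  have [measurable]: "f \<in> borel_measurable M" using assms(3) by auto
  have "(\<integral>\<^sup>+ x. ennreal \<bar>condE M F n f x\<bar> \<partial>M) \<le> (\<integral>\<^sup>+ x. nn_cond_exp M (F n) (\<lambda>x. ennreal \<bar>f x\<bar>) x \<partial>M)"
    unfolding condE_def by (rule nn_integral_mono_AE) (use real_cond_exp_abs in \<open>auto elim: eventually_mono\<close>)
  also have "\<dots> = (\<integral>\<^sup>+ x. ennreal \<bar>f x\<bar> \<partial>M)"
    using nn_cond_exp_intg[of "\<lambda>_. 1" "\<lambda>x. ennreal \<bar>f x\<bar>"] by simp
  finally show ?thesis .
qed

lemma condE_martingale_iterate: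
  assumes "prob_space M" "is_filtration M F"
    and meas: "\<And>n. g n \<in> borel_measurable (F n)" and int: "\<And>n. integrable M (g n)"
    and step: "\<And>n. AE x in M. condE M F n (g (Suc n)) x = g n x"
    and "n \<le> m"
  shows "AE x in M. condE M F n (g m) x = g n x"
  using assms(6)
proof (induction m rule: dec_induct)
  case base
  show ?case by (rule condE_F_measurable[OF assms(1,2) int meas])
next
  case (step m)
  have gm: "g k \<in> borel_measurable M" for k using measurable_filtration_M[OF assms(2) meas] .
  have "AE x in M. condE M F n (condE M F m (g (Suc m))) x = condE M F n (g (Suc m)) x"
    by (rule condE_nested[OF assms(1,2) int]) (use step in auto)
  moreover have "AE x in M. condE M F n (condE M F m (g (Suc m))) x = condE M F n (g m) x"
    by (rule condE_cong[OF assms(1,2) assms(5) condE_measurable(2)[OF assms(1,2)] gm])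
  ultimately show ?case using step.IH by eventually_elim auto
qed

lemma martingalesD:
  assumes "f \<in> martingales M F"
  shows "AE x in M. f 0 x = 0" "f n \<in> borel_measurable (F n)" "integrable M (f n)"
    "AE x in M. condE M F n (f (Suc n)) x = f n x"
  using assms unfolding martingales_def by auto

section \<open>Closing \<open>L\<^sup>2\<close>-bounded martingales\<close>

lemma martingale_square_increment:
  assumes P: "prob_space M" and Fi: "is_filtration M F"
    and meas: "\<And>n. g n \<in> borel_measurable (F n)"
    and bnd: "\<And>n. \<exists>B. AE x in M. \<bar>g n x\<bar> \<le> B"
    and step: "\<And>n. AE x in M. condE M F n (g (Suc n)) x = g n x"
    and "n \<le> m"
  shows "(\<integral>x. (g m x - g n x)\<^sup>2 \<partial>M) = (\<integral>x. (g m x)\<^sup>2 \<partial>M) - (\<integral>x. (g n x)\<^sup>2 \<partial>M)"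
proof -
  interpret prob_space M by fact
  have gM[measurable]: "g n \<in> borel_measurable M" for n using measurable_filtration_M[OF Fi meas] .
  have [measurable]: "condE M F n h \<in> borel_measurable M" for h using condE_measurable(2)[OF P Fi] .
  obtain B where B: "\<And>n. AE x in M. \<bar>g n x\<bar> \<le> B n" using bnd by metis
  have int: "integrable M (g n)" for n
    using B[of n] by (intro integrable_const_bound[of _ "B n"]) auto
  have int2: "integrable M (\<lambda>x. g n x * g m x)" for n m
  proof (rule integrable_const_bound[of _ "B n * B m"])
    show "AE x in M. norm (g n x * g m x) \<le> B n * B m"
      using B[of n] B[of m] by eventually_elim (auto simp: abs_mult intro: mult_mono)
  qed auto
  have int2': "integrable M (\<lambda>x. (g n x)\<^sup>2)" for n using int2[of n n] by (simp add: power2_eq_square)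
  have "(\<integral>x. g n x * g m x \<partial>M) = (\<integral>x. g n x * condE M F n (g m) x \<partial>M)"
    by (rule integral_mult_condE[OF P Fi int2 meas gM, symmetric])
  also have "\<dots> = (\<integral>x. (g n x)\<^sup>2 \<partial>M)"
    using condE_martingale_iterate[OF P Fi meas int step \<open>n \<le> m\<close>]
    by (intro integral_cong_AE) (auto simp: power2_eq_square elim: eventually_mono)
  finally have orth: "(\<integral>x. g n x * g m x \<partial>M) = (\<integral>x. (g n x)\<^sup>2 \<partial>M)" .
  have "(\<integral>x. (g m x - g n x)\<^sup>2 \<partial>M) = (\<integral>x. (g m x)\<^sup>2 - 2 * (g n x * g m x) + (g n x)\<^sup>2 \<partial>M)"
    by (rule arg_cong[where f="integral\<^sup>L M"]) (auto simp: fun_eq_iff power2_eq_square algebra_simps)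
  also have "\<dots> = (\<integral>x. (g m x)\<^sup>2 \<partial>M) - 2 * (\<integral>x. g n x * g m x \<partial>M) + (\<integral>x. (g n x)\<^sup>2 \<partial>M)"
    using int2 int2' by (simp add: integral_add integral_diff)
  finally show ?thesis using orth by simp
qed

lemma incseq_bounded_fast_subseq:
  fixes V :: "nat \<Rightarrow> real"
  assumes mono: "incseq V" and bdd: "\<And>n. V n \<le> K"
  obtains \<sigma> where "\<And>j. j \<le> \<sigma> j" "\<And>j. \<sigma> j \<le> \<sigma> (Suc j)" "\<And>j. V (\<sigma> (Suc j)) - V (\<sigma> j) < (1/4)^j"
proof -
  obtain L where L: "V \<longlonglongrightarrow> L" using incseq_convergent[OF mono] bdd by blast
  have VL: "V n \<le> L" for n using incseq_le[OF mono L] .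
  have "\<exists>N. \<forall>n\<ge>N. L - V n < (1/4::real)^j" for j
  proof -
    have "(1/4::real)^j > 0" by simp
    with L obtain N where "\<forall>n\<ge>N. dist (V n) L < (1/4)^j" unfolding lim_sequentially by blast
    then show ?thesis by (auto simp: dist_real_def abs_less_iff)
  qed
  then obtain N where N: "\<And>j n. n \<ge> N j \<Longrightarrow> L - V n < (1/4)^j" by metis
  define \<sigma> where "\<sigma> j = (\<Sum>i\<le>j. N i) + j" for j
  have N\<sigma>: "N j \<le> \<sigma> j" for j unfolding \<sigma>_def by (metis atMost_iff finite_atMost le_add1 member_le_sum order_refl trans_le_add1 zero_le)
  have "V (\<sigma> (Suc j)) - V (\<sigma> j) < (1/4)^j" for j
    using N[OF N\<sigma>, of j] VL[of "\<sigma> (Suc j)"] by linarith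
  moreover have "j \<le> \<sigma> j" "\<sigma> j \<le> \<sigma> (Suc j)" for j unfolding \<sigma>_def by simp_all
  ultimately show thesis using that by blast
qed

lemma abs_le_arith_mean_sq:
  fixes y c :: real assumes "c > 0" shows "\<bar>y\<bar> \<le> (c + y\<^sup>2 / c) / 2"
proof -
  have "0 \<le> (\<bar>y\<bar> - c)\<^sup>2" by simp
  then have "2 * c * \<bar>y\<bar> \<le> c\<^sup>2 + y\<^sup>2" by (simp add: power2_eq_square algebra_simps)
  then show ?thesis using assms by (simp add: field_simps power2_eq_square)
qed

lemma (in prob_space) nn_integral_abs_le_if_integral_square_le:
  assumes int: "integrable M h" "integrable M (\<lambda>x. (h x)\<^sup>2)"
    and sq: "(\<integral>x. (h x)\<^sup>2 \<partial>M) \<le> c\<^sup>2" and c: "c > 0"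
  shows "(\<integral>\<^sup>+x. ennreal \<bar>h x\<bar> \<partial>M) \<le> ennreal c"
proof -
  have "(\<integral>\<^sup>+x. ennreal \<bar>h x\<bar> \<partial>M) = ennreal (\<integral>x. \<bar>h x\<bar> \<partial>M)"
    by (rule nn_integral_eq_integral) (use int in auto)
  also have "(\<integral>x. \<bar>h x\<bar> \<partial>M) \<le> (\<integral>x. (c + (h x)\<^sup>2 / c) / 2 \<partial>M)"
    by (rule integral_mono) (use int abs_le_arith_mean_sq[OF c] in auto)
  also have "\<dots> = (c + (\<integral>x. (h x)\<^sup>2 \<partial>M) / c) / 2"
    using int by (simp add: prob_space)
  also have "\<dots> \<le> c"
    using sq c by (simp add: field_simps power2_eq_square)
  finally show ?thesis by (simp add: ennreal_leI)
qed

lemma integrable_limit_fast_L1_Cauchy: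
  assumes int: "\<And>j. integrable M (u j)"
    and fast: "\<And>j. (\<integral>\<^sup>+x. ennreal \<bar>u (Suc j) x - u j x\<bar> \<partial>M) \<le> ennreal ((1/2)^j)"
  obtains G where "integrable M G" "\<And>k. (\<integral>\<^sup>+x. ennreal \<bar>G x - u k x\<bar> \<partial>M) \<le> ennreal (2 * (1/2)^k)"
proof -
  have uM[measurable]: "u j \<in> borel_measurable M" for j using int by auto
  define h where "h j x = u (Suc j) x - u j x" for j x
  have hM[measurable]: "h j \<in> borel_measurable M" for j unfolding h_def by measurable
  have geo: "(\<Sum>j. ennreal ((1/2::real)^(j + k))) = ennreal (2 * (1/2)^k)" for k
  proof -
    have "(\<lambda>j. (1/2::real)^(j+k)) sums ((1/2)^k * (1 / (1 - 1/2)))"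
      using sums_mult[OF geometric_sums[of "1/2::real"], of "(1/2)^k"] by (simp add: power_add mult.commute)
    then have "(\<lambda>j. (1/2::real)^(j+k)) sums (2 * (1/2)^k)" by (simp add: mult.commute)
    then show ?thesis by (subst suminf_ennreal_eq) auto
  qed
  have tail_integral: "(\<integral>\<^sup>+x. (\<Sum>i. ennreal \<bar>h (i + k) x\<bar>) \<partial>M) \<le> ennreal (2 * (1/2)^k)" for k
  proof -
    have "(\<integral>\<^sup>+x. (\<Sum>i. ennreal \<bar>h (i + k) x\<bar>) \<partial>M) = (\<Sum>i. \<integral>\<^sup>+x. ennreal \<bar>h (i + k) x\<bar> \<partial>M)"
      by (rule nn_integral_suminf) measurable
    also have "\<dots> \<le> (\<Sum>i. ennreal ((1/2)^(i+k)))" by (intro suminf_le) (auto simp: h_def fast)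
    finally show ?thesis by (simp only: geo)
  qed
  have fin: "AE x in M. (\<Sum>j. ennreal \<bar>h j x\<bar>) \<noteq> \<infinity>"
    by (rule nn_integral_PInf_AE) (use tail_integral[of 0] in \<open>auto simp: top_unique\<close>)
  define G where "G x = lim (\<lambda>j. u j x)" for x
  have GM[measurable]: "G \<in> borel_measurable M" unfolding G_def by measurable
  have tail: "AE x in M. ennreal \<bar>G x - u k x\<bar> \<le> (\<Sum>i. ennreal \<bar>h (i + k) x\<bar>)" for k
    using fin
  proof eventually_elim
    case (elim x)
    have sa: "summable (\<lambda>j. \<bar>h j x\<bar>)"
      by (rule summable_suminf_not_top) (use elim in \<open>auto simp: infinity_ennreal_def\<close>)
    then have s: "summable (\<lambda>j. h j x)" by (rule summable_rabs_cancel)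
    have tel: "u j x = u 0 x + (\<Sum>i<j. h i x)" for j
      using sum_lessThan_telescope[of "\<lambda>i. u i x" j] unfolding h_def by simp
    have telf: "(\<lambda>j. u j x) = (\<lambda>j. u 0 x + (\<Sum>i<j. h i x))" by (rule ext, rule tel)
    have "(\<lambda>j. u j x) \<longlonglongrightarrow> u 0 x + (\<Sum>i. h i x)"
      unfolding telf by (intro tendsto_add tendsto_const summable_LIMSEQ s)
    then have "G x = u 0 x + (\<Sum>i. h i x)" unfolding G_def by (rule limI)
    then have "G x - u k x = (\<Sum>i. h (i + k) x)"
      using tel[of k] suminf_split_initial_segment[OF s, of k] by simp
    also have "\<bar>\<dots>\<bar> \<le> (\<Sum>i. \<bar>h (i + k) x\<bar>)"
      by (rule summable_rabs[OF summable_ignore_initial_segment[OF sa, of k]])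
    finally have "ennreal \<bar>G x - u k x\<bar> \<le> ennreal (\<Sum>i. \<bar>h (i + k) x\<bar>)" by (rule ennreal_leI)
    also have "\<dots> = (\<Sum>i. ennreal \<bar>h (i + k) x\<bar>)"
      by (rule suminf_ennreal2[symmetric]) (use summable_ignore_initial_segment[OF sa, of k] in auto)
    finally show ?case .
  qed
  have close: "(\<integral>\<^sup>+x. ennreal \<bar>G x - u k x\<bar> \<partial>M) \<le> ennreal (2 * (1/2)^k)" for k
    using nn_integral_mono_AE[OF tail] tail_integral by (rule order_trans)
  have "integrable M G"
  proof (rule integrableI_bounded)
    have "(\<integral>\<^sup>+x. ennreal (norm (G x)) \<partial>M) \<le> (\<integral>\<^sup>+x. ennreal \<bar>G x - u 0 x\<bar> + ennreal \<bar>u 0 x\<bar> \<partial>M)"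
      by (intro nn_integral_mono) (auto simp flip: ennreal_plus intro!: ennreal_leI)
    also have "\<dots> = (\<integral>\<^sup>+x. ennreal \<bar>G x - u 0 x\<bar> \<partial>M) + (\<integral>\<^sup>+x. ennreal \<bar>u 0 x\<bar> \<partial>M)"
      by (rule nn_integral_add) auto
    also have "\<dots> < \<infinity>"
      using close[of 0] int[of 0] by (auto simp: integrable_iff_bounded top.not_eq_extremum le_less_trans)
    finally show "(\<integral>\<^sup>+x. ennreal (norm (G x)) \<partial>M) < \<infinity>" .
  qed simp
  then show thesis using close by (rule that)
qed

lemma condE_eq_if_L1_approx:
  assumes P: "prob_space M" and Fi: "is_filtration M F"
    and G: "integrable M G" and u: "\<And>j. integrable M (u j)"
    and cond: "\<And>j. n \<le> j \<Longrightarrow> AE x in M. condE M F n (u j) x = v x"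
    and approx: "\<And>j. (\<integral>\<^sup>+x. ennreal \<bar>G x - u j x\<bar> \<partial>M) \<le> ennreal (e j)"
    and e: "\<And>j. 0 \<le> e j" "e \<longlonglongrightarrow> 0"
    and [measurable]: "v \<in> borel_measurable M"
  shows "AE x in M. condE M F n G x = v x"
proof -
  have [measurable]: "condE M F n h \<in> borel_measurable M" for h using condE_measurable(2)[OF P Fi] .
  define X where "X = (\<integral>\<^sup>+x. ennreal \<bar>condE M F n G x - v x\<bar> \<partial>M)"
  have X_le: "X \<le> ennreal (e j)" if "n \<le> j" for j
  proof -
    have "AE x in M. condE M F n G x - v x = condE M F n (\<lambda>x. G x - u j x) x"
      using condE_diff[OF P Fi G u[of j], where n=n] cond[OF that] by eventually_elim auto
    then have "X = (\<integral>\<^sup>+x. ennreal \<bar>condE M F n (\<lambda>x. G x - u j x) x\<bar> \<partial>M)"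
      unfolding X_def by (intro nn_integral_cong_AE) (auto elim: eventually_mono)
    also have "\<dots> \<le> (\<integral>\<^sup>+x. ennreal \<bar>G x - u j x\<bar> \<partial>M)"
      by (rule nn_integral_abs_condE_le[OF P Fi]) (use G u in auto)
    finally show ?thesis using approx[of j] by (rule order_trans)
  qed
  have "enn2real X \<le> e j" if "n \<le> j" for j
    using X_le[OF that] e(1)[of j] by (simp add: enn2real_leI)
  then have "enn2real X \<le> 0" using e(2) by (intro LIMSEQ_le_const[where X=e]) auto
  moreover have "X \<noteq> \<infinity>" using X_le[of n] by (auto simp: top_unique)
  ultimately have "X = 0" by (cases X) auto
  then have "AE x in M. ennreal \<bar>condE M F n G x - v x\<bar> = 0"
    unfolding X_def by (subst (asm) nn_integral_0_iff_AE) auto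
  then show ?thesis by eventually_elim auto
qed

lemma L2_bounded_martingale_closable:
  assumes P: "prob_space M" and Fi: "is_filtration M F"
    and meas: "\<And>n. g n \<in> borel_measurable (F n)"
    and bnd: "\<And>n. \<exists>B. AE x in M. \<bar>g n x\<bar> \<le> B"
    and step: "\<And>n. AE x in M. condE M F n (g (Suc n)) x = g n x"
    and L2: "\<And>n. (\<integral>x. (g n x)\<^sup>2 \<partial>M) \<le> K"
  shows "\<exists>G. integrable M G \<and> (\<forall>n. AE x in M. condE M F n G x = g n x)"
proof -
  interpret prob_space M by fact
  have gM[measurable]: "g n \<in> borel_measurable M" for n using measurable_filtration_M[OF Fi meas] .
  have [measurable]: "condE M F n h \<in> borel_measurable M" for n h using condE_measurable(2)[OF P Fi] .
  obtain B where B: "\<And>n. AE x in M. \<bar>g n x\<bar> \<le> B n" using bnd by metis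
  have int: "integrable M (g n)" for n
    using B[of n] by (intro integrable_const_bound[of _ "B n"]) auto
  have sq_int: "integrable M (\<lambda>x. (g m x - g n x)\<^sup>2)" for n m
  proof (rule integrable_const_bound[of _ "(B m + B n)\<^sup>2"])
    show "AE x in M. norm ((g m x - g n x)\<^sup>2) \<le> (B m + B n)\<^sup>2"
      using B[of m] B[of n]
    proof eventually_elim
      case (elim x)
      then have "\<bar>g m x - g n x\<bar> \<le> B m + B n" by linarith
      then have "\<bar>g m x - g n x\<bar>\<^sup>2 \<le> (B m + B n)\<^sup>2" by (rule power_mono) simp
      then show ?case by simp
    qed
  qed auto
  define V where "V n = (\<integral>x. (g n x)\<^sup>2 \<partial>M)" for n
  have incr: "(\<integral>x. (g m x - g n x)\<^sup>2 \<partial>M) = V m - V n" if "n \<le> m" for n m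
    unfolding V_def by (rule martingale_square_increment[OF P Fi meas bnd step that])
  have "incseq V"
  proof (rule incseq_SucI)
    fix n
    have "0 \<le> (\<integral>x. (g (Suc n) x - g n x)\<^sup>2 \<partial>M)" by simp
    then show "V n \<le> V (Suc n)" using incr[of n "Suc n"] by simp
  qed
  then obtain \<sigma> where \<sigma>: "\<And>j. j \<le> \<sigma> j" "\<And>j. \<sigma> j \<le> \<sigma> (Suc j)" "\<And>j. V (\<sigma> (Suc j)) - V (\<sigma> j) < (1/4)^j"
    using incseq_bounded_fast_subseq[of V K] L2 unfolding V_def by blast
  have "(\<integral>\<^sup>+x. ennreal \<bar>g (\<sigma> (Suc j)) x - g (\<sigma> j) x\<bar> \<partial>M) \<le> ennreal ((1/2)^j)" for j
  proof (rule nn_integral_abs_le_if_integral_square_le)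
    have "(\<integral>x. (g (\<sigma> (Suc j)) x - g (\<sigma> j) x)\<^sup>2 \<partial>M) < (1/4)^j" using incr[OF \<sigma>(2)] \<sigma>(3) by simp
    also have "(1/4::real)^j = ((1/2)^j)\<^sup>2"
      by (simp add: power_mult_distrib[symmetric] power2_eq_square flip: power_mult power_add)
    finally show "(\<integral>x. (g (\<sigma> (Suc j)) x - g (\<sigma> j) x)\<^sup>2 \<partial>M) \<le> ((1/2)^j)\<^sup>2" by simp
  qed (use int sq_int in auto)
  then obtain G where G: "integrable M G" "\<And>j. (\<integral>\<^sup>+x. ennreal \<bar>G x - g (\<sigma> j) x\<bar> \<partial>M) \<le> ennreal (2 * (1/2)^j)"
    using integrable_limit_fast_L1_Cauchy[where u="\<lambda>j. g (\<sigma> j)"] int by blast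
  have "AE x in M. condE M F n G x = g n x" for n
  proof (rule condE_eq_if_L1_approx[OF P Fi G(1) int])
    show "AE x in M. condE M F n (g (\<sigma> j)) x = g n x" if "n \<le> j" for j
      using that \<sigma>(1) le_trans by (intro condE_martingale_iterate[OF P Fi meas int step]) blast
    show "(\<lambda>j. 2 * (1/2::real)^j) \<longlonglongrightarrow> 0"
      by (intro tendsto_mult_right_zero LIMSEQ_power_zero) auto
  qed (use G(2) in auto)
  with G(1) show ?thesis by blast
qed

section \<open>Sums and powers in \<open>[0, \<infinity>]\<close>\<close>

lemma has_sum_single:
  fixes d :: "'b::{comm_monoid_add, topological_space}"
  shows "((\<lambda>k. if k = K then d else 0) has_sum d) UNIV"
proof -
  have "((\<lambda>k. if k = K then d else 0) has_sum d) UNIV \<longleftrightarrow> ((\<lambda>k. if k = K then d else 0) has_sum d) {K}"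
    by (rule has_sum_cong_neutral) auto
  moreover have "((\<lambda>k. if k = K then d else 0) has_sum d) {K}"
    using has_sum_finite[of "{K}" "\<lambda>k. if k = K then d else 0"] by simp
  ultimately show ?thesis by simp
qed

lemma has_sum_sum:
  fixes h :: "'i \<Rightarrow> 'k \<Rightarrow> 'b::{topological_comm_monoid_add}"
  assumes "finite I" "\<And>i. i \<in> I \<Longrightarrow> (h i has_sum s i) A"
  shows "((\<lambda>k. \<Sum>i\<in>I. h i k) has_sum (\<Sum>i\<in>I. s i)) A"
  using assms by (induction I rule: finite_induct) (simp_all add: has_sum_add)

lemma infsum_ennreal_eq_SUP: "infsum (f :: 'b \<Rightarrow> ennreal) A = (SUP F\<in>{F. finite F \<and> F \<subseteq> A}. sum f F)"
  by (rule nonneg_infsum_complete) simp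

lemma infsum_ennreal_cmult_le:
  fixes g :: "'b \<Rightarrow> ennreal"
  shows "infsum (\<lambda>k. c * g k) A \<le> c * infsum g A"
  unfolding infsum_ennreal_eq_SUP[of "\<lambda>k. c * g k"]
proof (rule SUP_least)
  fix F assume F: "F \<in> {F. finite F \<and> F \<subseteq> A}"
  have "sum (\<lambda>k. c * g k) F = c * sum g F" by (simp add: sum_distrib_left)
  also have "sum g F \<le> infsum g A" unfolding infsum_ennreal_eq_SUP by (rule SUP_upper) (use F in auto)
  then have "c * sum g F \<le> c * infsum g A" by (rule mult_left_mono) simp
  finally show "sum (\<lambda>k. c * g k) F \<le> c * infsum g A" .
qed

lemma infsum_ennreal_mono:
  fixes g h :: "'b \<Rightarrow> ennreal"
  assumes "\<And>k. g k \<le> h k"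
  shows "infsum g A \<le> infsum h A"
  by (rule infsum_mono) (auto intro: nonneg_summable_on_complete assms)
lemma L2_set_sum_le:
  fixes v :: "'k \<Rightarrow> 'i \<Rightarrow> real"
  assumes "finite F"
  shows "L2_set (\<lambda>i. \<Sum>k\<in>F. v k i) I \<le> (\<Sum>k\<in>F. L2_set (v k) I)"
  using assms
proof (induction F rule: finite_induct)
  case empty then show ?case by (simp add: L2_set_0')
next
  case (insert j F)
  have "L2_set (\<lambda>i. \<Sum>k\<in>insert j F. v k i) I = L2_set (\<lambda>i. v j i + (\<Sum>k\<in>F. v k i)) I"
    using insert by simp
  also have "\<dots> \<le> L2_set (v j) I + L2_set (\<lambda>i. \<Sum>k\<in>F. v k i) I" by (rule L2_set_triangle_ineq)
  also have "\<dots> \<le> L2_set (v j) I + (\<Sum>k\<in>F. L2_set (v k) I)" using insert by simp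
  also have "\<dots> = (\<Sum>k\<in>insert j F. L2_set (v k) I)" using insert by simp
  finally show ?case .
qed

lemma L2_set_has_sum_le:
  fixes v :: "'k \<Rightarrow> 'i \<Rightarrow> real"
  assumes I: "finite I" and hs: "\<And>i. i \<in> I \<Longrightarrow> ((\<lambda>k. v k i) has_sum s i) A"
  shows "ennreal (L2_set s I) \<le> infsum (\<lambda>k. ennreal (L2_set (v k) I)) A"
proof -
  have t: "((\<lambda>F. L2_set (\<lambda>i. \<Sum>k\<in>F. v k i) I) \<longlongrightarrow> L2_set s I) (finite_subsets_at_top A)"
    unfolding L2_set_def
  proof (intro tendsto_real_sqrt tendsto_sum tendsto_power)
    fix i assume "i \<in> I"
    then show "((\<lambda>F. \<Sum>k\<in>F. v k i) \<longlongrightarrow> s i) (finite_subsets_at_top A)"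
      using hs[of i] unfolding has_sum_def by simp
  qed
  then have t': "((\<lambda>F. ennreal (L2_set (\<lambda>i. \<Sum>k\<in>F. v k i) I)) \<longlongrightarrow> ennreal (L2_set s I)) (finite_subsets_at_top A)"
    by (rule tendsto_ennrealI)
  show ?thesis
  proof (rule tendsto_upperbound[OF t'])
    show "\<forall>\<^sub>F F in finite_subsets_at_top A. ennreal (L2_set (\<lambda>i. \<Sum>k\<in>F. v k i) I) \<le> infsum (\<lambda>k. ennreal (L2_set (v k) I)) A"
    proof (rule eventually_finite_subsets_at_top_weakI)
      fix F assume F: "finite F" "F \<subseteq> A"
      have "ennreal (L2_set (\<lambda>i. \<Sum>k\<in>F. v k i) I) \<le> ennreal (\<Sum>k\<in>F. L2_set (v k) I)"
        by (rule ennreal_leI) (rule L2_set_sum_le[OF F(1)])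
      also have "\<dots> = (\<Sum>k\<in>F. ennreal (L2_set (v k) I))" by (rule sum_ennreal[symmetric]) simp
      also have "\<dots> \<le> infsum (\<lambda>k. ennreal (L2_set (v k) I)) A"
        unfolding infsum_ennreal_eq_SUP by (rule SUP_upper) (use F in auto)
      finally show "ennreal (L2_set (\<lambda>i. \<Sum>k\<in>F. v k i) I) \<le> infsum (\<lambda>k. ennreal (L2_set (v k) I)) A" .
    qed
  qed simp
qed

lemma borel_measurable_infsum_ennreal[measurable (raw)]:
  fixes h :: "'k::countable \<Rightarrow> 'a \<Rightarrow> ennreal"
  assumes [measurable]: "\<And>k. h k \<in> borel_measurable N"
  shows "(\<lambda>x. infsum (\<lambda>k. h k x) UNIV) \<in> borel_measurable N"
proof -
  have c: "countable {F :: 'k set. finite F \<and> F \<subseteq> UNIV}"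
    using countable_Collect_finite by simp
  have "(\<lambda>x. SUP F\<in>{F. finite F \<and> F \<subseteq> UNIV}. sum (\<lambda>k. h k x) F) \<in> borel_measurable N"
    by (rule borel_measurable_SUP[OF c]) measurable
  then show ?thesis by (simp only: infsum_ennreal_eq_SUP)
qed

lemma epow_ennreal: "0 \<le> x \<Longrightarrow> epow (ennreal x) p = ennreal (x powr p)"
  unfolding epow_def by simp

lemma epow_top[simp]: "epow \<top> p = \<top>"
  unfolding epow_def by simp

lemma epow_zero[simp]: "epow 0 p = 0"
  unfolding epow_def by simp

lemma epow_mono: assumes "t \<le> s" "0 \<le> p" shows "epow t p \<le> epow s p"
proof (cases "s = \<top>")
  case True then show ?thesis by simp
next
  case False
  then have "t \<noteq> \<top>" using assms(1) by (auto simp: top_unique)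
  then obtain a b where "t = ennreal a" "s = ennreal b" "0 \<le> a" "0 \<le> b" using False
    by (metis ennreal_cases)
  then show ?thesis using assms by (auto simp: epow_ennreal intro!: ennreal_leI powr_mono2)
qed

lemma epow_mult: assumes "c > 0" "p > 0" shows "epow (ennreal c * t) p = ennreal (c powr p) * epow t p"
proof (cases "t = \<top>")
  case True then show ?thesis using assms by (simp add: ennreal_mult_top)
next
  case False
  then obtain a where "t = ennreal a" "0 \<le> a" by (metis ennreal_cases)
  then show ?thesis using assms by (simp add: epow_ennreal powr_mult flip: ennreal_mult)
qed

lemma epow_epow: assumes "p > 0" "q > 0" shows "epow (epow t p) q = epow t (p * q)"
proof (cases "t = \<top>")
  case True then show ?thesis by simp
next
  case False
  then obtain a where "t = ennreal a" "0 \<le> a" by (metis ennreal_cases)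
  then show ?thesis using assms by (simp add: epow_ennreal powr_powr)
qed

lemma epow_eq_0D: assumes "epow t p = 0" shows "t = 0"
proof (cases "t = \<top>")
  case True then show ?thesis using assms by simp
next
  case False
  then obtain a where a: "t = ennreal a" "0 \<le> a" by (metis ennreal_cases)
  then have "a powr p = 0" using assms by (simp add: epow_ennreal)
  then show ?thesis using a by simp
qed

lemma epow_one[simp]: "epow t 1 = t"
  by (cases t) (simp_all add: epow_def)

lemma self_le_powr_scale:
  fixes s T r :: real
  assumes s: "0 \<le> s" "s powr r \<le> T" and r: "0 < r" "r \<le> 1"
  shows "s \<le> T powr (1/r - 1) * s powr r"
proof (cases "s = 0")
  case False
  then have "s > 0" using s by simp
  have "r * (1/r - 1) = 1 - r" using r by (simp add: field_simps)
  then have "s powr (1 - r) = (s powr r) powr (1/r - 1)" by (simp add: powr_powr)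
  also have "\<dots> \<le> T powr (1/r - 1)"
    using \<open>s > 0\<close> s r by (intro powr_mono2) auto
  finally have "s powr r * s powr (1 - r) \<le> s powr r * T powr (1/r - 1)"
    by (rule mult_left_mono) simp
  then show ?thesis using \<open>s > 0\<close> by (simp add: powr_add[symmetric] mult.commute)
qed simp

lemma infsum_le_epow_infsum_epow:
  fixes t :: "'b \<Rightarrow> ennreal"
  assumes r: "0 < r" "r \<le> 1"
  shows "infsum t UNIV \<le> epow (infsum (\<lambda>k. epow (t k) r) UNIV) (1 / r)"
proof -
  define T where "T = infsum (\<lambda>k. epow (t k) r) UNIV"
  have Tk: "epow (t k) r \<le> T" for k
  proof -
    have "sum (\<lambda>k. epow (t k) r) {k} \<le> T" unfolding T_def infsum_ennreal_eq_SUP by (rule SUP_upper) auto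
    then show ?thesis by simp
  qed
  consider "T = \<top>" | "T = 0" | T' where "T = ennreal T'" "T' > 0"
    by (metis ennreal_cases ennreal_less_zero_iff not_gr_zero)
  then show ?thesis
  proof cases
    case 1 then show ?thesis by (simp add: T_def[symmetric])
  next
    case 2
    then have "t = (\<lambda>_. 0)" using Tk by (auto intro: epow_eq_0D[of _ r])
    then show ?thesis by simp
  next
    case 3
    define c where "c = T' powr (1/r - 1)"
    have tk: "t k \<le> ennreal c * epow (t k) r" for k
    proof -
      obtain s where s: "t k = ennreal s" "0 \<le> s"
        using Tk[of k] 3 by (cases "t k") (auto simp: top_unique)
      have "s powr r \<le> T'" using Tk[of k] s 3 by (simp add: epow_ennreal)
      then have "ennreal s \<le> ennreal (c * s powr r)"
        unfolding c_def using s r by (intro ennreal_leI self_le_powr_scale) auto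
      then show ?thesis using s by (simp add: epow_ennreal ennreal_mult c_def)
    qed
    have "infsum t UNIV \<le> infsum (\<lambda>k. ennreal c * epow (t k) r) UNIV"
      by (rule infsum_ennreal_mono) (rule tk)
    also have "\<dots> \<le> ennreal c * T" unfolding T_def by (rule infsum_ennreal_cmult_le)
    also have "ennreal c * T = ennreal (T' powr (1/r - 1) * T' powr 1)"
      using 3 by (simp add: c_def flip: ennreal_mult)
    also have "\<dots> = epow T (1/r)"
      using 3 by (simp only: powr_add[symmetric]) (simp add: epow_ennreal)
    finally show ?thesis unfolding T_def .
  qed
qed

section \<open>Dyadic levels\<close>

definition two_pow :: "int \<Rightarrow> real" where "two_pow k = 2 powr (real_of_int k)"

lemma two_pow_pos: "two_pow k > 0" unfolding two_pow_def by simp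

lemma two_pow_add_one: "two_pow (k + 1) = 2 * two_pow k"
  unfolding two_pow_def by (simp add: powr_add)

lemma two_pow_mono: "k \<le> l \<Longrightarrow> two_pow k \<le> two_pow l"
  unfolding two_pow_def by simp

lemma two_pow_strict_mono: "k < l \<Longrightarrow> two_pow k < two_pow l"
  unfolding two_pow_def by simp

lemma two_pow_less_iff_le:
  assumes "two_pow K < t" "t \<le> two_pow (K + 1)"
  shows "two_pow k < t \<longleftrightarrow> k \<le> K"
proof
  assume "two_pow k < t"
  then show "k \<le> K" using assms two_pow_mono[of "K + 1" k] by (cases "k \<le> K") auto
next
  assume "k \<le> K"
  then show "two_pow k < t" using assms two_pow_mono[of k K] by linarith
qed

lemma ex1_two_pow_interval:
  assumes "t > 0"
  shows "\<exists>!k. two_pow k < t \<and> t \<le> two_pow (k + 1)"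
proof -
  define K where "K = \<lceil>log 2 t\<rceil> - 1"
  have "real_of_int K < log 2 t" "log 2 t \<le> real_of_int (K + 1)" unfolding K_def by linarith+
  then have "2 powr real_of_int K < 2 powr (log 2 t)" "2 powr (log 2 t) \<le> 2 powr real_of_int (K + 1)"
    by (simp_all only: powr_less_cancel_iff powr_le_cancel_iff)
  then have K: "two_pow K < t" "t \<le> two_pow (K + 1)"
    using assms unfolding two_pow_def by simp_all
  moreover have "k = K" if "two_pow k < t" "t \<le> two_pow (k + 1)" for k
    using two_pow_less_iff_le[OF K, of k] two_pow_less_iff_le[OF that, of K] K that by simp
  ultimately show ?thesis by blast
qed

lemma two_pow_diff_powr: "two_pow (K - int j) powr r = two_pow K powr r * (2 powr (- r)) ^ j"
proof -
  have "((2::real) powr (- r)) ^ j = (2 powr (- r)) powr (real j)" by (simp add: powr_realpow)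
  also have "\<dots> = 2 powr (- r * real j)" by (simp add: powr_powr)
  finally have e: "(2::real) powr (- r * real j) = (2 powr (- r)) ^ j" by simp
  have "two_pow (K - int j) powr r = 2 powr (real_of_int K * r + (- r * real j))"
    unfolding two_pow_def by (simp add: powr_powr algebra_simps)
  also have "\<dots> = 2 powr (real_of_int K * r) * (2 powr (- r)) ^ j"
    by (simp only: powr_add e)
  finally show ?thesis unfolding two_pow_def by (simp add: powr_powr)
qed

lemma infsum_nat_ennreal: "infsum f (UNIV :: nat set) = suminf (f :: nat \<Rightarrow> ennreal)"
proof -
  have "(f has_sum infsum f UNIV) UNIV" by (rule has_sum_infsum, rule nonneg_summable_on_complete) simp
  then have "f sums infsum f UNIV" by (rule has_sum_imp_sums)
  then show ?thesis by (simp add: sums_iff)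
qed

lemma infsum_two_pow_below_le:
  assumes r: "0 < r"
  shows "infsum (\<lambda>k::int. ennreal (two_pow k powr r) * (if ennreal (two_pow k) < L then 1 else 0)) UNIV
     \<le> ennreal (1 / (1 - 2 powr (- r))) * epow L r"
proof -
  define q where "q = (2::real) powr (- r)"
  have q: "0 < q" "q < 1" using r unfolding q_def by (simp_all add: powr_minus inverse_less_1_iff)
  consider "L = \<top>" | "L = 0" | l where "L = ennreal l" "l > 0"
    by (metis ennreal_cases ennreal_less_zero_iff not_gr_zero)
  then show ?thesis
  proof cases
    case 1
    have "ennreal (1 / (1 - q)) \<noteq> 0" using q by simp
    then show ?thesis using 1 by (simp add: ennreal_mult_top q_def)
  next
    case 2 then show ?thesis by simp
  next
    case 3
    obtain K where K: "two_pow K < l" "l \<le> two_pow (K + 1)"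
      using ex1_two_pow_interval[OF 3(2)] by blast
    have below: "ennreal (two_pow k) < L \<longleftrightarrow> k \<le> K" for k
      using 3 two_pow_pos[of k] two_pow_less_iff_le[OF K] by (simp add: ennreal_less_iff)
    have bij: "bij_betw (\<lambda>j. K - int j) UNIV {..K}"
      by (rule bij_betw_byWitness[where f'="\<lambda>k. nat (K - k)"]) auto
    have geo: "(\<lambda>j. two_pow K powr r * q ^ j) sums (two_pow K powr r / (1 - q))"
      using sums_mult[OF geometric_sums[of q], of "two_pow K powr r"] q by (simp add: divide_inverse)
    have "infsum (\<lambda>k. ennreal (two_pow k powr r) * (if ennreal (two_pow k) < L then 1 else 0)) UNIV
        = infsum (\<lambda>k. ennreal (two_pow k powr r)) {..K}"
      by (rule infsum_cong_neutral) (auto simp: below)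
    also have "\<dots> = infsum (\<lambda>j. ennreal (two_pow (K - int j) powr r)) UNIV"
      by (rule infsum_reindex_bij_betw[OF bij, symmetric])
    also have "\<dots> = (\<Sum>j. ennreal (two_pow K powr r * q ^ j))"
      by (simp add: infsum_nat_ennreal two_pow_diff_powr q_def)
    also have "\<dots> = ennreal (two_pow K powr r / (1 - q))"
      using geo q by (intro suminf_ennreal_eq) auto
    also have "\<dots> \<le> ennreal (1 / (1 - q) * l powr r)"
      using K q r two_pow_pos[of K] by (intro ennreal_leI) (simp add: divide_right_mono powr_mono2)
    also have "\<dots> = ennreal (1 / (1 - 2 powr (- r))) * epow L r"
      using 3 q by (simp add: epow_ennreal q_def flip: ennreal_mult)
    finally show ?thesis .
  qed
qed

section \<open>Cutting a martingale along the dyadic levels of a control sequence\<close>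

lemma Lambda_mono:
  assumes "lam \<in> Lambda M F" "x \<in> space M" "m \<le> n"
  shows "lam m x \<le> lam n x"
proof -
  have "lam i x \<le> lam (Suc i) x" for i using assms(1,2) unfolding Lambda_def by auto
  then show ?thesis using assms(3) by (rule lift_Suc_mono_le)
qed

lemma Lambda_nonneg:
  assumes "lam \<in> Lambda M F" "x \<in> space M"
  shows "0 \<le> lam n x"
  using assms unfolding Lambda_def by auto

lemma Lambda_measurable:
  assumes "lam \<in> Lambda M F"
  shows "lam n \<in> borel_measurable (F n)"
  using assms unfolding Lambda_def by auto

definition level_time :: "(nat \<Rightarrow> 'a \<Rightarrow> real) \<Rightarrow> int \<Rightarrow> 'a \<Rightarrow> enat" where
  "level_time lam k x = (if \<exists>n. two_pow k < lam n x then enat (LEAST n. two_pow k < lam n x) else \<infinity>)"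

definition level_diff :: "(nat \<Rightarrow> 'a \<Rightarrow> real) \<Rightarrow> (nat \<Rightarrow> 'a \<Rightarrow> real) \<Rightarrow> int \<Rightarrow> nat \<Rightarrow> 'a \<Rightarrow> real" where
  "level_diff lam f k i x =
     (if two_pow k < lam (i - 1) x \<and> lam (i - 1) x \<le> two_pow (k + 1) then f i x - f (i - 1) x else 0)"

text \<open>\<open>level_part lam f k n = f (min n \<nu>\<^sub>k\<^sub>+\<^sub>1) - f (min n \<nu>\<^sub>k)\<close> for \<open>\<nu>\<^sub>k = level_time lam k\<close>:
  the increment \<open>d\<^sub>if\<close> is kept iff \<open>\<nu>\<^sub>k < i \<le> \<nu>\<^sub>k\<^sub>+\<^sub>1\<close>.\<close>
definition level_part :: "(nat \<Rightarrow> 'a \<Rightarrow> real) \<Rightarrow> (nat \<Rightarrow> 'a \<Rightarrow> real) \<Rightarrow> int \<Rightarrow> nat \<Rightarrow> 'a \<Rightarrow> real" where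
  "level_part lam f k n x = (\<Sum>i\<in>{1..n}. level_diff lam f k i x)"

lemma level_time_le_iff:
  assumes "lam \<in> Lambda M F" "x \<in> space M"
  shows "level_time lam k x \<le> enat n \<longleftrightarrow> two_pow k < lam n x"
proof (cases "\<exists>m. two_pow k < lam m x")
  case True
  then have nu: "level_time lam k x = enat (LEAST m. two_pow k < lam m x)" by (simp add: level_time_def)
  show ?thesis
  proof
    assume "level_time lam k x \<le> enat n"
    then have le: "(LEAST m. two_pow k < lam m x) \<le> n" using nu by simp
    have "two_pow k < lam (LEAST m. two_pow k < lam m x) x" using True by (rule LeastI_ex)
    also have "\<dots> \<le> lam n x" by (rule Lambda_mono[OF assms le])
    finally show "two_pow k < lam n x" .
  next
    assume "two_pow k < lam n x"
    then have "(LEAST m. two_pow k < lam m x) \<le> n" by (rule Least_le)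
    then show "level_time lam k x \<le> enat n" using nu by simp
  qed
next
  case False
  then show ?thesis by (simp add: level_time_def)
qed

lemma stopping_time_level_time:
  assumes "is_filtration M F" "lam \<in> Lambda M F"
  shows "is_stopping_time M F (level_time lam k)"
  unfolding is_stopping_time_def
proof
  fix n :: nat
  have eq: "{x \<in> space M. level_time lam k x \<le> enat n} = {x \<in> space (F n). two_pow k < lam n x}"
    using level_time_le_iff[OF assms(2)] space_filtration[OF assms(1)] by auto
  have [measurable]: "lam n \<in> borel_measurable (F n)" by (rule Lambda_measurable[OF assms(2)])
  show "{x \<in> space M. level_time lam k x \<le> enat n} \<in> sets (F n)" unfolding eq by measurable
qed

lemma B_set_level_time:
  assumes "lam \<in> Lambda M F"
  shows "B_set M (level_time lam k) = {x \<in> space M. ennreal (two_pow k) < lam_inf lam x}"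
proof -
  have "level_time lam k x < \<infinity> \<longleftrightarrow> ennreal (two_pow k) < lam_inf lam x" if x: "x \<in> space M" for x
  proof -
    have "level_time lam k x < \<infinity> \<longleftrightarrow> (\<exists>n. two_pow k < lam n x)" by (simp add: level_time_def)
    also have "\<dots> \<longleftrightarrow> (\<exists>n. ennreal (two_pow k) < ennreal (lam n x))"
      using two_pow_pos[of k] by (simp add: ennreal_less_iff)
    also have "\<dots> \<longleftrightarrow> ennreal (two_pow k) < lam_inf lam x"
      unfolding lam_inf_def by (simp add: less_SUP_iff)
    finally show ?thesis .
  qed
  then show ?thesis unfolding B_set_def by auto
qed

lemma B_set_level_time_sets:
  assumes "is_filtration M F" "lam \<in> Lambda M F"
  shows "B_set M (level_time lam k) \<in> sets M"
proof -
  have [measurable]: "lam n \<in> borel_measurable M" for n using measurable_filtration_M[OF assms(1) Lambda_measurable[OF assms(2)]] .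
  have [measurable]: "lam_inf lam \<in> borel_measurable M" unfolding lam_inf_def by measurable
  show ?thesis unfolding B_set_level_time[OF assms(2)] by measurable
qed

lemma level_part_eq_0_before:
  assumes "lam \<in> Lambda M F" "x \<in> space M" "enat n \<le> level_time lam k x"
  shows "level_part lam f k n x = 0"
proof -
  have "level_diff lam f k i x = 0" if "i \<in> {1..n}" for i
  proof -
    have "\<not> two_pow k < lam (i - 1) x"
    proof
      assume "two_pow k < lam (i - 1) x"
      then have "level_time lam k x \<le> enat (i - 1)" using level_time_le_iff[OF assms(1,2)] by simp
      with assms(3) have "enat n \<le> enat (i - 1)" by (rule order_trans)
      then show False using that by auto
    qed
    then show ?thesis unfolding level_diff_def by simp
  qed
  then show ?thesis unfolding level_part_def by simp
qed

lemma level_part_eq_0_outside: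
  assumes "lam \<in> Lambda M F" "x \<in> space M" "x \<notin> B_set M (level_time lam k)"
  shows "level_part lam f k n x = 0"
  using assms level_part_eq_0_before[OF assms(1,2)] unfolding B_set_def by auto

lemma level_diff_measurable:
  assumes Fi: "is_filtration M F" and lam: "lam \<in> Lambda M F" and f: "f \<in> martingales M F"
  shows "level_diff lam f k i \<in> borel_measurable (F i)"
proof -
  have [measurable]: "lam (i - 1) \<in> borel_measurable (F i)"
    by (rule measurable_filtration_mono[OF Fi _ Lambda_measurable[OF lam]]) simp
  have [measurable]: "f (i - 1) \<in> borel_measurable (F i)"
    by (rule measurable_filtration_mono[OF Fi _ martingalesD(2)[OF f]]) simp
  have [measurable]: "f i \<in> borel_measurable (F i)" by (rule martingalesD(2)[OF f])
  show ?thesis unfolding level_diff_def by measurable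
qed

lemma level_part_measurable:
  assumes Fi: "is_filtration M F" and lam: "lam \<in> Lambda M F" and f: "f \<in> martingales M F"
  shows "level_part lam f k n \<in> borel_measurable (F n)"
proof -
  have "level_diff lam f k i \<in> borel_measurable (F n)" if "i \<in> {1..n}" for i
    by (rule measurable_filtration_mono[OF Fi _ level_diff_measurable[OF Fi lam f]]) (use that in auto)
  then show ?thesis unfolding level_part_def by (intro borel_measurable_sum) auto
qed

definition level_set :: "'a measure \<Rightarrow> (nat \<Rightarrow> 'a \<Rightarrow> real) \<Rightarrow> int \<Rightarrow> nat \<Rightarrow> 'a set" where
  "level_set M lam k n = {x \<in> space M. two_pow k < lam n x \<and> lam n x \<le> two_pow (k + 1)}"

lemma level_set_sets:
  assumes Fi: "is_filtration M F" and lam: "lam \<in> Lambda M F"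
  shows "level_set M lam k n \<in> sets (F n)"
proof -
  have [measurable]: "lam n \<in> borel_measurable (F n)" by (rule Lambda_measurable[OF lam])
  have "level_set M lam k n = {x \<in> space (F n). two_pow k < lam n x \<and> lam n x \<le> two_pow (k + 1)}"
    unfolding level_set_def using space_filtration[OF Fi] by simp
  also have "\<dots> \<in> sets (F n)" by measurable
  finally show ?thesis .
qed

lemma level_diff_Suc:
  assumes "x \<in> space M"
  shows "level_diff lam f k (Suc n) x = indicator (level_set M lam k n) x * (f (Suc n) x - f n x)"
  using assms unfolding level_diff_def level_set_def by (auto simp: indicator_def)

lemma integrable_level_diff:
  assumes P: "prob_space M" and Fi: "is_filtration M F" and lam: "lam \<in> Lambda M F" and f: "f \<in> martingales M F"
  shows "integrable M (level_diff lam f k i)"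
proof (cases i)
  case 0
  have "level_diff lam f k 0 = (\<lambda>x. 0)" by (simp add: level_diff_def fun_eq_iff)
  then show ?thesis using 0 by simp
next
  case (Suc n)
  have A: "level_set M lam k n \<in> sets M" by (rule sets_filtration_M[OF Fi level_set_sets[OF Fi lam]])
  have "integrable M (\<lambda>x. (f (Suc n) x - f n x) * indicator (level_set M lam k n) x)"
    by (intro integrable_real_mult_indicator A Bochner_Integration.integrable_diff martingalesD(3)[OF f])
  moreover have "integrable M (level_diff lam f k (Suc n)) \<longleftrightarrow> integrable M (\<lambda>x. (f (Suc n) x - f n x) * indicator (level_set M lam k n) x)"
    by (rule Bochner_Integration.integrable_cong) (auto simp: level_diff_Suc mult.commute)
  ultimately show ?thesis unfolding Suc by simp
qed

lemma integrable_level_part: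
  assumes P: "prob_space M" and Fi: "is_filtration M F" and lam: "lam \<in> Lambda M F" and f: "f \<in> martingales M F"
  shows "integrable M (level_part lam f k n)"
  unfolding level_part_def by (rule Bochner_Integration.integrable_sum) (rule integrable_level_diff[OF assms])

lemma level_part_Suc: "level_part lam f k (Suc n) x = level_part lam f k n x + level_diff lam f k (Suc n) x"
  unfolding level_part_def by simp

lemma level_part_martingale:
  assumes P: "prob_space M" and Fi: "is_filtration M F" and lam: "lam \<in> Lambda M F" and f: "f \<in> martingales M F"
  shows "AE x in M. condE M F n (level_part lam f k (Suc n)) x = level_part lam f k n x"
proof -
  have cM[measurable]: "condE M F m h \<in> borel_measurable M" for m h using condE_measurable(2)[OF P Fi] .
  have fM[measurable]: "f m \<in> borel_measurable M" for m using measurable_filtration_M[OF Fi martingalesD(2)[OF f]] .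
  have A: "level_set M lam k n \<in> sets (F n)" by (rule level_set_sets[OF Fi lam])
  have AM: "level_set M lam k n \<in> sets M" by (rule sets_filtration_M[OF Fi A])
  have indF: "indicator (level_set M lam k n) \<in> borel_measurable (F n)" using A by simp
  have eq1: "level_part lam f k (Suc n) = (\<lambda>x. level_part lam f k n x + level_diff lam f k (Suc n) x)"
    by (simp add: level_part_Suc fun_eq_iff)
  have a1: "AE x in M. condE M F n (level_part lam f k (Suc n)) x = condE M F n (level_part lam f k n) x + condE M F n (level_diff lam f k (Suc n)) x"
    unfolding eq1 by (rule condE_add[OF P Fi integrable_level_part[OF assms] integrable_level_diff[OF assms]])
  have a2: "AE x in M. condE M F n (level_part lam f k n) x = level_part lam f k n x"
    by (rule condE_F_measurable[OF P Fi integrable_level_part[OF assms] level_part_measurable[OF Fi lam f]])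
  have dint: "integrable M (\<lambda>x. f (Suc n) x - f n x)"
    by (intro Bochner_Integration.integrable_diff martingalesD(3)[OF f])
  have a3: "AE x in M. condE M F n (level_diff lam f k (Suc n)) x = condE M F n (\<lambda>x. indicator (level_set M lam k n) x * (f (Suc n) x - f n x)) x"
  proof (rule condE_cong[OF P Fi])
    show "AE x in M. level_diff lam f k (Suc n) x = indicator (level_set M lam k n) x * (f (Suc n) x - f n x)"
      by (rule AE_I2) (rule level_diff_Suc)
    show "level_diff lam f k (Suc n) \<in> borel_measurable M"
      by (rule measurable_filtration_M[OF Fi level_diff_measurable[OF Fi lam f]])
    show "(\<lambda>x. indicator (level_set M lam k n) x * (f (Suc n) x - f n x)) \<in> borel_measurable M"
      using AM by measurable
  qed
  have a4: "AE x in M. condE M F n (\<lambda>x. indicator (level_set M lam k n) x * (f (Suc n) x - f n x)) x = indicator (level_set M lam k n) x * condE M F n (\<lambda>x. f (Suc n) x - f n x) x"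
  proof (rule condE_mult[OF P Fi indF])
    show "integrable M (\<lambda>x. indicator (level_set M lam k n) x * (f (Suc n) x - f n x))"
      using integrable_real_mult_indicator[OF AM dint] by (simp add: mult.commute)
  qed measurable
  have a5: "AE x in M. condE M F n (\<lambda>x. f (Suc n) x - f n x) x = condE M F n (f (Suc n)) x - condE M F n (f n) x"
    by (rule condE_diff[OF P Fi martingalesD(3)[OF f] martingalesD(3)[OF f]])
  have a6: "AE x in M. condE M F n (f n) x = f n x"
    by (rule condE_F_measurable[OF P Fi martingalesD(3)[OF f] martingalesD(2)[OF f]])
  from a1 a2 a3 a4 a5 a6 martingalesD(4)[OF f, of n] show ?thesis
    by eventually_elim simp
qed

text \<open>A positive value of \<open>\<lambda>\<close> lies in exactly one interval \<open>(2\<^sup>k, 2\<^sup>k\<^sup>+\<^sup>1]\<close>; where \<open>\<lambda>\<close> vanishes no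
  level keeps the increment, which therefore has to vanish itself.\<close>
lemma has_sum_level_diff:
  assumes lam: "lam \<in> Lambda M F" and x: "x \<in> space M"
    and z: "lam (i - 1) x = 0 \<Longrightarrow> f i x = f (i - 1) x"
  shows "((\<lambda>k. level_diff lam f k i x) has_sum (f i x - f (i - 1) x)) UNIV"
proof (cases "lam (i - 1) x = 0")
  case True
  have "level_diff lam f k i x = 0" for k
  proof -
    have "\<not> two_pow k < lam (i - 1) x" using True two_pow_pos[of k] by linarith
    then show ?thesis unfolding level_diff_def by (simp only: if_False simp_thms)
  qed
  then have "(\<lambda>k. level_diff lam f k i x) = (\<lambda>k. 0)" by (simp add: fun_eq_iff)
  moreover have "f i x - f (i - 1) x = 0" using z[OF True] by linarith
  ultimately show ?thesis by (simp only: has_sum_0_simp)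
next
  case False
  then have pos: "lam (i - 1) x > 0" using Lambda_nonneg[OF lam x] by (simp add: order_less_le)
  obtain K where K: "two_pow K < lam (i - 1) x \<and> lam (i - 1) x \<le> two_pow (K + 1)"
    and Ku: "\<And>k. two_pow k < lam (i - 1) x \<and> lam (i - 1) x \<le> two_pow (k + 1) \<Longrightarrow> k = K"
    using ex1_two_pow_interval[OF pos] unfolding Ex1_def by metis
  have "level_diff lam f k i x = (if k = K then f i x - f (i - 1) x else 0)" for k
  proof (cases "k = K")
    case True then show ?thesis using K unfolding level_diff_def by simp
  next
    case False then have "\<not> (two_pow k < lam (i - 1) x \<and> lam (i - 1) x \<le> two_pow (k + 1))" using Ku[of k] by blast
    then show ?thesis using False unfolding level_diff_def by (simp only: if_False)
  qed
  then show ?thesis using has_sum_single[of K "f i x - f (i - 1) x"] by simp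
qed

lemma sum_atLeast1_diff_telescope: fixes f :: "nat \<Rightarrow> 'a \<Rightarrow> real" shows "(\<Sum>i\<in>{1..n}. f i x - f (i - 1) x) = f n x - f 0 x"
  by (induction n) auto

lemma has_sum_level_part:
  assumes lam: "lam \<in> Lambda M F" and x: "x \<in> space M" and f0: "f 0 x = 0"
    and z: "\<And>i. i \<ge> 1 \<Longrightarrow> lam (i - 1) x = 0 \<Longrightarrow> f i x = f (i - 1) x"
  shows "((\<lambda>k. level_part lam f k n x) has_sum f n x) UNIV"
proof -
  have "((\<lambda>k. \<Sum>i\<in>{1..n}. level_diff lam f k i x) has_sum (\<Sum>i\<in>{1..n}. f i x - f (i - 1) x)) UNIV"
  proof (rule has_sum_sum)
    fix i assume "i \<in> {1..n}"
    then have "1 \<le> i" by simp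
    show "((\<lambda>k. level_diff lam f k i x) has_sum (f i x - f (i - 1) x)) UNIV"
      by (rule has_sum_level_diff[OF lam x]) (rule z[OF \<open>1 \<le> i\<close>])
  qed simp
  then show ?thesis unfolding level_part_def sum_atLeast1_diff_telescope f0 by simp
qed

text \<open>As \<open>l\<close> is nondecreasing, the indices kept on the left form an initial segment of \<open>{1..n}\<close>.\<close>
lemma abs_stopped_sum_le:
  fixes e l :: "nat \<Rightarrow> real"
  assumes mono: "\<And>m n. m \<le> n \<Longrightarrow> l m \<le> l n"
    and hyp: "\<And>n. n \<ge> 1 \<Longrightarrow> l (n - 1) \<le> c \<Longrightarrow> \<bar>\<Sum>i\<in>{1..n}. e i\<bar> \<le> b"
    and b: "b \<ge> 0"
  shows "\<bar>\<Sum>i\<in>{1..n}. (if l (i - 1) \<le> c then e i else 0)\<bar> \<le> b"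
proof (induction n)
  case 0 then show ?case using b by simp
next
  case (Suc n)
  show ?case
  proof (cases "l n \<le> c")
    case True
    have "(\<Sum>i\<in>{1..Suc n}. (if l (i - 1) \<le> c then e i else 0)) = (\<Sum>i\<in>{1..Suc n}. e i)"
    proof (rule sum.cong)
      fix i assume "i \<in> {1..Suc n}"
      then have "l (i - 1) \<le> l n" by (intro mono) auto
      then show "(if l (i - 1) \<le> c then e i else 0) = e i" using True by auto
    qed simp
    then show ?thesis using hyp[of "Suc n"] True by simp
  next
    case False
    then show ?thesis using Suc.IH by simp
  qed
qed

lemma level_part_eq_diff:
  "level_part lam f k n x = (\<Sum>i\<in>{1..n}. (if lam (i - 1) x \<le> two_pow (k + 1) then f i x - f (i - 1) x else 0))
      - (\<Sum>i\<in>{1..n}. (if lam (i - 1) x \<le> two_pow k then f i x - f (i - 1) x else 0))"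
proof -
  have "two_pow k < two_pow (k + 1)" by (rule two_pow_strict_mono) simp
  then have "level_diff lam f k i x = (if lam (i - 1) x \<le> two_pow (k + 1) then f i x - f (i - 1) x else 0)
      - (if lam (i - 1) x \<le> two_pow k then f i x - f (i - 1) x else 0)" for i
    unfolding level_diff_def by auto
  then show ?thesis unfolding level_part_def by (simp add: sum_subtractf)
qed

lemma abs_level_part_le_P:
  assumes lam: "lam \<in> Lambda M F" and x: "x \<in> space M" and f0: "f 0 x = 0"
    and adm: "\<And>n. n \<ge> 1 \<Longrightarrow> \<bar>f n x\<bar> \<le> lam (n - 1) x"
  shows "\<bar>level_part lam f k n x\<bar> \<le> 3 * two_pow k"
proof -
  have Q: "\<bar>\<Sum>i\<in>{1..n}. (if lam (i - 1) x \<le> c then f i x - f (i - 1) x else 0)\<bar> \<le> c" if c: "c \<ge> 0" for c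
  proof (rule abs_stopped_sum_le[where l="\<lambda>m. lam m x"])
    show "lam m x \<le> lam n x" if "m \<le> n" for m n using Lambda_mono[OF lam x that] .
    fix n :: nat assume n: "n \<ge> 1" "lam (n - 1) x \<le> c"
    have "\<bar>\<Sum>i\<in>{1..n}. f i x - f (i - 1) x\<bar> = \<bar>f n x\<bar>" using sum_atLeast1_diff_telescope[of f x n] f0 by simp
    also have "\<dots> \<le> c" using adm[OF n(1)] n(2) by linarith
    finally show "\<bar>\<Sum>i\<in>{1..n}. f i x - f (i - 1) x\<bar> \<le> c" .
  qed (rule c)
  have "\<bar>level_part lam f k n x\<bar> \<le> two_pow (k + 1) + two_pow k"
    unfolding level_part_eq_diff using Q[of "two_pow (k + 1)"] Q[of "two_pow k"] two_pow_pos[of k] two_pow_pos[of "k + 1"]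
    by (smt (verit))
  also have "\<dots> = 3 * two_pow k" by (simp add: two_pow_add_one)
  finally show ?thesis .
qed

lemma sum_sq_level_diff_le_Q:
  assumes lam: "lam \<in> Lambda M F" and x: "x \<in> space M"
    and adm: "\<And>n. n \<ge> 1 \<Longrightarrow> sqfun_n f n x \<le> lam (n - 1) x"
  shows "(\<Sum>i\<in>{1..n}. (level_diff lam f k i x)\<^sup>2) \<le> (two_pow (k + 1))\<^sup>2"
proof -
  let ?c = "two_pow (k + 1)"
  have c0: "?c \<ge> 0" using two_pow_pos[of "k+1"] by simp
  have Q: "\<bar>\<Sum>i\<in>{1..n}. (if lam (i - 1) x \<le> ?c then (f i x - f (i - 1) x)\<^sup>2 else 0)\<bar> \<le> ?c\<^sup>2"
  proof (rule abs_stopped_sum_le[where l="\<lambda>m. lam m x"])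
    show "lam m x \<le> lam n x" if "m \<le> n" for m n using Lambda_mono[OF lam x that] .
    fix n :: nat assume n: "n \<ge> 1" "lam (n - 1) x \<le> ?c"
    have s: "sqfun_n f n x \<le> ?c" using adm[OF n(1)] n(2) by linarith
    have nn: "0 \<le> (\<Sum>i\<in>{1..n}. (f i x - f (i - 1) x)\<^sup>2)" by (intro sum_nonneg) simp
    have "(\<Sum>i\<in>{1..n}. (f i x - f (i - 1) x)\<^sup>2) = (sqfun_n f n x)\<^sup>2"
      unfolding sqfun_n_def using nn by simp
    also have "\<dots> \<le> ?c\<^sup>2" using s by (intro power_mono) (auto simp: sqfun_n_def intro: sum_nonneg)
    finally show "\<bar>\<Sum>i\<in>{1..n}. (f i x - f (i - 1) x)\<^sup>2\<bar> \<le> ?c\<^sup>2" using nn by simp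
  qed simp
  have "(\<Sum>i\<in>{1..n}. (level_diff lam f k i x)\<^sup>2) \<le> (\<Sum>i\<in>{1..n}. (if lam (i - 1) x \<le> ?c then (f i x - f (i - 1) x)\<^sup>2 else 0))"
    by (intro sum_mono) (auto simp: level_diff_def)
  also have "\<dots> \<le> ?c\<^sup>2" using Q by simp
  finally show ?thesis .
qed

lemma abs_level_diff_le_Q:
  assumes lam: "lam \<in> Lambda M F" and x: "x \<in> space M"
    and adm: "\<And>n. n \<ge> 1 \<Longrightarrow> sqfun_n f n x \<le> lam (n - 1) x"
  shows "\<bar>level_diff lam f k i x\<bar> \<le> two_pow (k + 1)"
proof (cases "i \<ge> 1")
  case True
  have "(level_diff lam f k i x)\<^sup>2 \<le> (\<Sum>j\<in>{1..i}. (level_diff lam f k j x)\<^sup>2)"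
    using True by (intro member_le_sum) auto
  also have "\<dots> \<le> (two_pow (k + 1))\<^sup>2" by (rule sum_sq_level_diff_le_Q[OF lam x adm])
  finally have "(level_diff lam f k i x)\<^sup>2 \<le> (two_pow (k + 1))\<^sup>2" .
  then have "\<bar>level_diff lam f k i x\<bar> \<le> \<bar>two_pow (k + 1)\<bar>" by (simp add: abs_le_square_iff)
  then show ?thesis using two_pow_pos[of "k+1"] by simp
next
  case False
  then have "i = 0" by simp
  then show ?thesis using two_pow_pos[of "k+1"] by (simp add: level_diff_def)
qed

lemma abs_level_part_le_Q:
  assumes lam: "lam \<in> Lambda M F" and x: "x \<in> space M"
    and adm: "\<And>n. n \<ge> 1 \<Longrightarrow> sqfun_n f n x \<le> lam (n - 1) x"
  shows "\<bar>level_part lam f k n x\<bar> \<le> real n * two_pow (k + 1)"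
proof -
  have "\<bar>level_part lam f k n x\<bar> \<le> (\<Sum>i\<in>{1..n}. \<bar>level_diff lam f k i x\<bar>)" unfolding level_part_def by (rule sum_abs)
  also have "\<dots> \<le> (\<Sum>i\<in>{1..n}. two_pow (k + 1))" by (intro sum_mono abs_level_diff_le_Q[OF lam x adm])
  also have "\<dots> = real n * two_pow (k + 1)" by simp
  finally show ?thesis .
qed

lemma condE_cdiv_all:
  assumes P: "prob_space M" and Fi: "is_filtration M F"
    and G: "integrable M G" "\<And>n. AE x in M. condE M F n G x = g n x"
  shows "AE x in M. \<forall>n. condE M F n (\<lambda>x. G x / c) x = g n x / c"
proof (subst AE_all_countable, intro allI)
  fix n show "AE x in M. condE M F n (\<lambda>x. G x / c) x = g n x / c"
    using condE_cdiv[OF P Fi G(1), where n=n and c=c] G(2)[of n] by eventually_elim simp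
qed

lemma integral_square_martingale:
  assumes P: "prob_space M" and Fi: "is_filtration M F"
    and meas: "\<And>n. g n \<in> borel_measurable (F n)"
    and bnd: "\<And>n. \<exists>B. AE x in M. \<bar>g n x\<bar> \<le> B"
    and step: "\<And>n. AE x in M. condE M F n (g (Suc n)) x = g n x"
    and g0: "AE x in M. g 0 x = 0"
  shows "(\<integral>x. (g n x)\<^sup>2 \<partial>M) = (\<Sum>i\<in>{1..n}. \<integral>x. (g i x - g (i - 1) x)\<^sup>2 \<partial>M)"
proof (induction n)
  case 0
  show ?case by simp (rule integral_eq_zero_AE, use g0 in \<open>auto elim: eventually_mono\<close>)
next
  case (Suc n)
  then show ?case
    using martingale_square_increment[OF P Fi meas bnd step, of n "Suc n"] by simp
qed

lemma level_part_closable_M: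
  assumes P: "prob_space M" and Fi: "is_filtration M F" and f: "f \<in> martingales M F" and lam: "lam \<in> Lambda M F"
    and adm: "\<And>n. n \<ge> 1 \<Longrightarrow> AE x in M. \<bar>f n x\<bar> \<le> lam (n - 1) x"
  shows "\<exists>G. integrable M G \<and> (\<forall>n. AE x in M. condE M F n G x = level_part lam f k n x)
        \<and> (\<forall>c>0. AE x in M. M_atom M F (\<lambda>x. G x / c) x \<le> ennreal (3 * two_pow k / c))"
proof -
  interpret prob_space M by fact
  have [measurable]: "level_part lam f k n \<in> borel_measurable M" for n
    using measurable_filtration_M[OF Fi level_part_measurable[OF Fi lam f]] .
  have "AE x in M. \<forall>n. n \<ge> 1 \<longrightarrow> \<bar>f n x\<bar> \<le> lam (n - 1) x"
    using adm by (subst AE_all_countable) auto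
  then have bound: "AE x in M. \<forall>n. \<bar>level_part lam f k n x\<bar> \<le> 3 * two_pow k"
    using martingalesD(1)[OF f] AE_space by eventually_elim (blast intro: abs_level_part_le_P[OF lam])
  have sq_bound: "AE x in M. (level_part lam f k n x)\<^sup>2 \<le> (3 * two_pow k)\<^sup>2" for n
    using bound
  proof eventually_elim
    case (elim x)
    have "0 \<le> 3 * two_pow k" using two_pow_pos[of k] by simp
    then show ?case using elim by (simp only: power2_le_iff_abs_le)
  qed
  obtain G where G: "integrable M G" "\<And>n. AE x in M. condE M F n G x = level_part lam f k n x"
  proof -
    have "\<exists>G. integrable M G \<and> (\<forall>n. AE x in M. condE M F n G x = level_part lam f k n x)"
    proof (rule L2_bounded_martingale_closable[OF P Fi level_part_measurable[OF Fi lam f] _ level_part_martingale[OF P Fi lam f]])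
      show "\<exists>B. AE x in M. \<bar>level_part lam f k n x\<bar> \<le> B" for n
        using bound by (intro exI[of _ "3 * two_pow k"]) (auto elim: eventually_mono)
      show "(\<integral>x. (level_part lam f k n x)\<^sup>2 \<partial>M) \<le> (3 * two_pow k)\<^sup>2" for n
        using integral_mono_AE[OF _ _ sq_bound[of n]] sq_bound[of n]
        by (simp add: prob_space integrable_const_bound[where B="(3 * two_pow k)\<^sup>2"])
    qed
    then show thesis using that by blast
  qed
  have "AE x in M. M_atom M F (\<lambda>x. G x / c) x \<le> ennreal (3 * two_pow k / c)" if c: "c > 0" for c
    using condE_cdiv_all[OF P Fi G, of c] bound
  proof eventually_elim
    case (elim x)
    have "\<bar>level_part lam f k n x / c\<bar> \<le> 3 * two_pow k / c" for n
      using elim c by (simp add: divide_right_mono)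
    then show ?case unfolding M_atom_def using elim by (auto intro!: SUP_least ennreal_leI)
  qed
  then show ?thesis using G by blast
qed

lemma S_atom_le:
  assumes incr: "\<And>i. condE M F (Suc i) a x - condE M F i a x = d (Suc i)"
    and bnd: "\<And>n. (\<Sum>i\<in>{1..n}. (d i)\<^sup>2) \<le> b\<^sup>2" and b: "0 \<le> b"
  shows "S_atom M F a x \<le> ennreal b"
proof -
  have "(\<Sum>i. ennreal ((condE M F (Suc i) a x - condE M F i a x)\<^sup>2)) \<le> ennreal (b\<^sup>2)"
  proof (rule suminf_le_const)
    fix n
    have "(\<Sum>i<n. ennreal ((condE M F (Suc i) a x - condE M F i a x)\<^sup>2)) = ennreal (\<Sum>i\<in>{1..n}. (d i)\<^sup>2)"
      by (simp add: incr sum_bounds_lt_plus1[of "\<lambda>i. ennreal ((d i)\<^sup>2)"] flip: sum_ennreal)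
    then show "(\<Sum>i<n. ennreal ((condE M F (Suc i) a x - condE M F i a x)\<^sup>2)) \<le> ennreal (b\<^sup>2)"
      using bnd[of n] by (simp add: ennreal_leI)
  qed (rule summableI)
  then have "S_atom M F a x \<le> epow (ennreal (b\<^sup>2)) (1/2)"
    unfolding S_atom_def by (rule epow_mono) simp
  also have "\<dots> = ennreal b" using b by (simp add: epow_ennreal powr_half_sqrt)
  finally show ?thesis .
qed

lemma level_part_closable_S:
  assumes P: "prob_space M" and Fi: "is_filtration M F" and f: "f \<in> martingales M F" and lam: "lam \<in> Lambda M F"
    and adm: "\<And>n. n \<ge> 1 \<Longrightarrow> AE x in M. sqfun_n f n x \<le> lam (n - 1) x"
  shows "\<exists>G. integrable M G \<and> (\<forall>n. AE x in M. condE M F n G x = level_part lam f k n x)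
        \<and> (\<forall>c>0. AE x in M. S_atom M F (\<lambda>x. G x / c) x \<le> ennreal (3 * two_pow k / c))"
proof -
  interpret prob_space M by fact
  let ?c = "two_pow (k + 1)"
  have "AE x in M. \<forall>n. n \<ge> 1 \<longrightarrow> sqfun_n f n x \<le> lam (n - 1) x"
    using adm by (subst AE_all_countable) auto
  then have bound: "AE x in M. (\<forall>n. (\<Sum>i\<in>{1..n}. (level_diff lam f k i x)\<^sup>2) \<le> ?c\<^sup>2)
      \<and> (\<forall>n. \<bar>level_part lam f k n x\<bar> \<le> real n * ?c) \<and> (\<forall>i. \<bar>level_diff lam f k i x\<bar> \<le> ?c)"
    using AE_space
    by eventually_elim
      (blast intro: sum_sq_level_diff_le_Q[OF lam] abs_level_part_le_Q[OF lam] abs_level_diff_le_Q[OF lam])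
  have [measurable]: "level_diff lam f k n \<in> borel_measurable M" for n
    using measurable_filtration_M[OF Fi level_diff_measurable[OF Fi lam f]] .
  have bnd: "\<exists>B. AE x in M. \<bar>level_part lam f k n x\<bar> \<le> B" for n
    using bound by (intro exI[of _ "real n * ?c"]) (auto elim: eventually_mono)
  have sq_int: "integrable M (\<lambda>x. (level_diff lam f k i x)\<^sup>2)" for i
  proof (rule integrable_const_bound[of _ "?c\<^sup>2"])
    show "AE x in M. norm ((level_diff lam f k i x)\<^sup>2) \<le> ?c\<^sup>2"
      using bound
    proof eventually_elim
      case (elim x)
      have "0 \<le> ?c" using two_pow_pos[of "k + 1"] by simp
      then show ?case using elim by (simp only: real_norm_def abs_power2 power2_le_iff_abs_le)
    qed
  qed auto
  obtain G where G: "integrable M G" "\<And>n. AE x in M. condE M F n G x = level_part lam f k n x"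
  proof -
    have "\<exists>G. integrable M G \<and> (\<forall>n. AE x in M. condE M F n G x = level_part lam f k n x)"
    proof (rule L2_bounded_martingale_closable[OF P Fi level_part_measurable[OF Fi lam f] bnd level_part_martingale[OF P Fi lam f]])
      fix n
      have "(\<integral>x. (level_part lam f k n x)\<^sup>2 \<partial>M) = (\<Sum>i\<in>{1..n}. \<integral>x. (level_diff lam f k i x)\<^sup>2 \<partial>M)"
      proof -
        have "level_part lam f k i x - level_part lam f k (i - 1) x = level_diff lam f k i x" if "i \<ge> 1" for i x
          using that by (cases i) (simp_all add: level_part_Suc)
        then show ?thesis
          using integral_square_martingale[OF P Fi level_part_measurable[OF Fi lam f] bnd level_part_martingale[OF P Fi lam f]]
          by (simp add: level_part_def[of _ _ _ 0])
      qed
      also have "\<dots> = (\<integral>x. (\<Sum>i\<in>{1..n}. (level_diff lam f k i x)\<^sup>2) \<partial>M)"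
        by (rule Bochner_Integration.integral_sum[symmetric]) (rule sq_int)
      also have "\<dots> \<le> (\<integral>x. ?c\<^sup>2 \<partial>M)"
        using bound by (intro integral_mono_AE Bochner_Integration.integrable_sum sq_int) (auto elim: eventually_mono)
      finally show "(\<integral>x. (level_part lam f k n x)\<^sup>2 \<partial>M) \<le> ?c\<^sup>2" by (simp add: prob_space)
    qed
    then show thesis using that by blast
  qed
  have "AE x in M. S_atom M F (\<lambda>x. G x / c) x \<le> ennreal (3 * two_pow k / c)" if c: "c > 0" for c
    using condE_cdiv_all[OF P Fi G, of c] bound
  proof eventually_elim
    case (elim x)
    have "S_atom M F (\<lambda>x. G x / c) x \<le> ennreal (?c / c)"
    proof (rule S_atom_le)
      show "condE M F (Suc i) (\<lambda>x. G x / c) x - condE M F i (\<lambda>x. G x / c) x = level_diff lam f k (Suc i) x / c" for i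
        using elim by (simp add: level_part_Suc diff_divide_distrib[symmetric])
      show "(\<Sum>i\<in>{1..n}. (level_diff lam f k i x / c)\<^sup>2) \<le> (?c / c)\<^sup>2" for n
        using elim c by (simp add: power_divide sum_divide_distrib[symmetric] divide_right_mono)
    qed (use c two_pow_pos[of "k + 1"] in simp)
    also have "?c / c \<le> 3 * two_pow k / c" using c two_pow_pos[of k] by (simp add: two_pow_add_one divide_right_mono)
    finally show ?case by (simp add: ennreal_leI)
  qed
  then show ?thesis using G by blast
qed

section \<open>From a control sequence to an atomic decomposition\<close>

definition control_norm :: "'a measure \<Rightarrow> (nat \<Rightarrow> 'a measure) \<Rightarrow> ('a \<Rightarrow> real \<Rightarrow> real) \<Rightarrow> (nat \<Rightarrow> 'a \<Rightarrow> real) \<Rightarrow> ennreal" where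
  "control_norm M F \<phi> X = Inf {mo_norm M \<phi> (lam_inf lam) | lam. lam \<in> Lambda M F \<and>
       (\<forall>n\<ge>1. AE x in M. X n x \<le> lam (n - 1) x)}"

lemma P_norm_eq_control_norm: "P_norm M F \<phi> f = control_norm M F \<phi> (\<lambda>n x. \<bar>f n x\<bar>)"
  unfolding P_norm_def control_norm_def ..

lemma Q_norm_eq_control_norm: "Q_norm M F \<phi> f = control_norm M F \<phi> (sqfun_n f)"
  unfolding Q_norm_def control_norm_def ..

definition atomic_const :: "real \<Rightarrow> real" where
  "atomic_const r = 3 * (1 / (1 - 2 powr (- r))) powr (1 / r)"

lemma atomic_const_pos: "0 < r \<Longrightarrow> atomic_const r > 0"
  unfolding atomic_const_def by (simp add: powr_minus inverse_less_1_iff)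

lemma mo_norm_indicator_level_le:
  assumes MO: "musielak_orlicz M \<phi>" and lam: "lam \<in> Lambda M F"
  shows "mo_norm M \<phi> (indicator (B_set M (level_time lam k))) \<le> ennreal (1 / two_pow k) * mo_norm M \<phi> (lam_inf lam)"
proof -
  have "indicator (B_set M (level_time lam k)) x \<le> ennreal (1 / two_pow k) * lam_inf lam x" for x
  proof (cases "x \<in> B_set M (level_time lam k)")
    case True
    then have "ennreal (two_pow k) \<le> lam_inf lam x" by (simp add: B_set_level_time[OF lam] less_imp_le)
    then have "ennreal (1 / two_pow k) * ennreal (two_pow k) \<le> ennreal (1 / two_pow k) * lam_inf lam x"
      by (rule mult_left_mono) simp
    then show ?thesis using True two_pow_pos[of k] by (simp flip: ennreal_mult)
  qed simp
  then have "mo_norm M \<phi> (indicator (B_set M (level_time lam k))) \<le> mo_norm M \<phi> (\<lambda>x. ennreal (1 / two_pow k) * lam_inf lam x)"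
    by (intro mo_norm_mono_AE[OF MO]) auto
  also have "\<dots> = ennreal (1 / two_pow k) * mo_norm M \<phi> (lam_inf lam)"
    by (rule mo_norm_cmult) (simp add: two_pow_pos)
  finally show ?thesis .
qed

lemma epow_infsum_levels_le:
  assumes r: "0 < r" and t: "\<And>k. t k \<le> ennreal (3 * two_pow k) * (if ennreal (two_pow k) < L then 1 else 0)"
  shows "epow (\<Sum>\<^sub>\<infinity>k. epow (t k) r) (1 / r) \<le> ennreal (atomic_const r) * L"
proof -
  define Cq where "Cq = 1 / (1 - 2 powr (- r))"
  have Cq: "Cq > 0" unfolding Cq_def using r by (simp add: powr_minus inverse_less_1_iff)
  let ?g = "\<lambda>k::int. ennreal (two_pow k powr r) * (if ennreal (two_pow k) < L then 1 else 0)"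
  have "epow (t k) r \<le> ennreal (3 powr r) * ?g k" for k
  proof -
    have "epow (t k) r \<le> epow (ennreal (3 * two_pow k) * (if ennreal (two_pow k) < L then 1 else 0)) r"
      by (rule epow_mono[OF t]) (use r in simp)
    also have "\<dots> = ennreal (3 powr r) * ?g k"
    proof (cases "ennreal (two_pow k) < L")
      case True
      have "epow (ennreal (3 * two_pow k)) r = ennreal ((3 * two_pow k) powr r)"
        using two_pow_pos[of k] by (intro epow_ennreal) simp
      also have "\<dots> = ennreal (3 powr r) * ennreal (two_pow k powr r)"
        using two_pow_pos[of k] by (simp add: powr_mult ennreal_mult)
      finally show ?thesis using True by simp
    qed simp
    finally show ?thesis .
  qed
  then have "(\<Sum>\<^sub>\<infinity>k. epow (t k) r) \<le> (\<Sum>\<^sub>\<infinity>k. ennreal (3 powr r) * ?g k)"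
    by (rule infsum_ennreal_mono)
  also have "\<dots> \<le> ennreal (3 powr r) * (\<Sum>\<^sub>\<infinity>k. ?g k)" by (rule infsum_ennreal_cmult_le)
  also have "\<dots> \<le> ennreal (3 powr r) * (ennreal Cq * epow L r)"
    using infsum_two_pow_below_le[OF r, of L] by (intro mult_left_mono) (simp_all add: Cq_def)
  also have "\<dots> = ennreal (3 powr r * Cq) * epow L r"
    using Cq by (simp add: ennreal_mult mult.assoc)
  finally have "epow (\<Sum>\<^sub>\<infinity>k. epow (t k) r) (1 / r) \<le> epow (ennreal (3 powr r * Cq) * epow L r) (1 / r)"
    by (rule epow_mono) (use r in simp)
  also have "\<dots> = ennreal ((3 powr r * Cq) powr (1 / r)) * L"
    using Cq r by (simp add: epow_mult epow_epow)
  also have "(3 powr r * Cq) powr (1 / r) = 3 * Cq powr (1 / r)"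
    using Cq r by (simp add: powr_mult powr_powr)
  also have "\<dots> = atomic_const r" unfolding atomic_const_def Cq_def ..
  finally show ?thesis .
qed

definition level_coeff :: "'a measure \<Rightarrow> ('a \<Rightarrow> real \<Rightarrow> real) \<Rightarrow> (nat \<Rightarrow> 'a \<Rightarrow> real) \<Rightarrow> int \<Rightarrow> real" where
  "level_coeff M \<phi> lam k = 3 * two_pow k * enn2real (mo_norm M \<phi> (indicator (B_set M (level_time lam k))))"

lemma mo_norm_indicator_level_eq:
  assumes MO: "musielak_orlicz M \<phi>" and lam: "lam \<in> Lambda M F" and fin: "mo_norm M \<phi> (lam_inf lam) < \<top>"
  shows "mo_norm M \<phi> (indicator (B_set M (level_time lam k))) = ennreal (level_coeff M \<phi> lam k / (3 * two_pow k))"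
proof -
  have "mo_norm M \<phi> (indicator (B_set M (level_time lam k))) < \<top>"
    using mo_norm_indicator_level_le[OF MO lam, of k] fin by (simp add: ennreal_mult_less_top le_less_trans)
  then show ?thesis using two_pow_pos[of k] by (simp add: level_coeff_def less_top)
qed

lemma atomic_size_level_coeff_le:
  assumes MO: "musielak_orlicz M \<phi>" and lam: "lam \<in> Lambda M F" and r: "0 < r"
    and fin: "mo_norm M \<phi> (lam_inf lam) < \<top>"
  shows "atomic_size M \<phi> r (level_coeff M \<phi> lam) (level_time lam) \<le> ennreal (atomic_const r) * mo_norm M \<phi> (lam_inf lam)"
proof -
  have "ennreal (level_coeff M \<phi> lam k) * indicator (B_set M (level_time lam k)) x
          * inverse (mo_norm M \<phi> (indicator (B_set M (level_time lam k))))
        \<le> ennreal (3 * two_pow k) * (if ennreal (two_pow k) < lam_inf lam x then 1 else 0)" for k x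
  proof (cases "x \<in> B_set M (level_time lam k) \<and> level_coeff M \<phi> lam k > 0")
    case True
    then have "ennreal (level_coeff M \<phi> lam k) * inverse (ennreal (level_coeff M \<phi> lam k / (3 * two_pow k)))
        = ennreal (3 * two_pow k)"
      using two_pow_pos[of k] by (simp add: inverse_ennreal flip: ennreal_mult)
    then show ?thesis
      using True mo_norm_indicator_level_eq[OF MO lam fin, of k] by (simp add: B_set_level_time[OF lam])
  next
    case False
    moreover have "level_coeff M \<phi> lam k \<ge> 0" unfolding level_coeff_def using two_pow_pos[of k] by simp
    ultimately show ?thesis by auto
  qed
  then have "epow (\<Sum>\<^sub>\<infinity>k. epow (ennreal (level_coeff M \<phi> lam k) * indicator (B_set M (level_time lam k)) x
          * inverse (mo_norm M \<phi> (indicator (B_set M (level_time lam k))))) r) (1 / r)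
      \<le> ennreal (atomic_const r) * lam_inf lam x" for x
    by (rule epow_infsum_levels_le[OF r])
  then have "atomic_size M \<phi> r (level_coeff M \<phi> lam) (level_time lam)
      \<le> mo_norm M \<phi> (\<lambda>x. ennreal (atomic_const r) * lam_inf lam x)"
    unfolding atomic_size_def by (intro mo_norm_mono_AE[OF MO]) auto
  also have "\<dots> = ennreal (atomic_const r) * mo_norm M \<phi> (lam_inf lam)"
    by (rule mo_norm_cmult[OF atomic_const_pos[OF r]])
  finally show ?thesis .
qed

lemma atomic_decomp_level_coeff:
  fixes T :: "('a \<Rightarrow> real) \<Rightarrow> 'a \<Rightarrow> ennreal"
  assumes P: "prob_space M" and Fi: "is_filtration M F" and MO: "musielak_orlicz M \<phi>"
    and f: "f \<in> martingales M F" and lam: "lam \<in> Lambda M F" and fin: "mo_norm M \<phi> (lam_inf lam) < \<top>"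
    and zero: "AE x in M. \<forall>i\<ge>1. lam (i - 1) x = 0 \<longrightarrow> f i x = f (i - 1) x"
    and gen: "\<And>k. \<exists>G. integrable M G \<and> (\<forall>n. AE x in M. condE M F n G x = level_part lam f k n x)
        \<and> (\<forall>c>0. AE x in M. T (\<lambda>x. G x / c) x \<le> ennreal (3 * two_pow k / c))"
  shows "\<exists>a. atomic_decomp M F \<phi> T f (level_coeff M \<phi> lam) a (level_time lam)"
proof -
  obtain G where G: "\<And>k. integrable M (G k)" "\<And>k n. AE x in M. condE M F n (G k) x = level_part lam f k n x"
    "\<And>k c. c > 0 \<Longrightarrow> AE x in M. T (\<lambda>x. G k x / c) x \<le> ennreal (3 * two_pow k / c)"
    using gen by metis
  define \<mu> where "\<mu> = level_coeff M \<phi> lam"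
  define B where "B k = B_set M (level_time lam k)" for k
  have N: "mo_norm M \<phi> (indicator (B k)) = ennreal (\<mu> k / (3 * two_pow k))" for k
    unfolding \<mu>_def B_def by (rule mo_norm_indicator_level_eq[OF MO lam fin])
  have \<mu>_nn: "\<mu> k \<ge> 0" for k unfolding \<mu>_def level_coeff_def using two_pow_pos[of k] by simp
  \<comment> \<open>If \<open>\<mu> k = 0\<close> then \<open>B k\<close> is null, the \<open>k\<close>-th piece vanishes a.e. and is not rescaled.\<close>
  define c where "c k = (if \<mu> k > 0 then \<mu> k else 1)" for k
  have c: "c k > 0" for k unfolding c_def by simp
  define a where "a k x = G k x / c k" for k x
  have ca: "AE x in M. \<forall>n. condE M F n (a k) x = level_part lam f k n x / c k" for k
    unfolding a_def by (rule condE_cdiv_all[OF P Fi G(1,2)])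
  have atom: "is_atom M F \<phi> T (a k) (level_time lam k)" for k
    unfolding is_atom_def
  proof (intro conjI allI)
    show "integrable M (a k)" unfolding a_def using G(1) by simp
    show "is_stopping_time M F (level_time lam k)" by (rule stopping_time_level_time[OF Fi lam])
    show "AE x in M. enat n \<le> level_time lam k x \<longrightarrow> condE M F n (a k) x = 0" for n
      using ca[of k] AE_space by eventually_elim (auto dest: level_part_eq_0_before[OF lam])
    show "AE x in M. x \<in> B_set M (level_time lam k) \<longrightarrow> T (a k) x \<le> inverse (mo_norm M \<phi> (indicator (B_set M (level_time lam k))))"
    proof (cases "\<mu> k > 0")
      case True
      then have "ennreal (3 * two_pow k / c k) = inverse (mo_norm M \<phi> (indicator (B k)))"
        unfolding N c_def using two_pow_pos[of k] by (simp add: inverse_ennreal)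
      then show ?thesis using G(3)[OF c[of k], of k] unfolding a_def B_def by (auto elim: eventually_mono)
    next
      case False
      then have "\<mu> k = 0" using \<mu>_nn[of k] by simp
      then show ?thesis using N[of k] unfolding B_def by simp
    qed
  qed
  have each: "AE x in M. \<forall>n. \<mu> k * condE M F n (a k) x = level_part lam f k n x" for k
  proof (cases "\<mu> k > 0")
    case True
    show ?thesis using ca[of k] by eventually_elim (use True in \<open>simp add: c_def\<close>)
  next
    case False
    then have "\<mu> k = 0" using \<mu>_nn[of k] by simp
    then have "emeasure M (B k) = 0"
      using N[of k] B_set_level_time_sets[OF Fi lam]
      by (intro emeasure_eq_0_if_mo_norm_indicator_eq_0[OF MO]) (simp_all add: B_def)
    then have "AE x in M. x \<notin> B k" by (intro AE_not_in) (simp add: null_sets_def B_set_level_time_sets[OF Fi lam] B_def)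
    then show ?thesis using AE_space
      by eventually_elim (simp add: \<open>\<mu> k = 0\<close> B_def level_part_eq_0_outside[OF lam])
  qed
  have all: "AE x in M. \<forall>k n. \<mu> k * condE M F n (a k) x = level_part lam f k n x"
    using each by (subst AE_all_countable) blast
  have "AE x in M. ((\<lambda>k. \<mu> k * condE M F n (a k) x) has_sum f n x) UNIV" for n
    using all zero martingalesD(1)[OF f] AE_space
  proof eventually_elim
    case (elim x)
    then have "((\<lambda>k. level_part lam f k n x) has_sum f n x) UNIV"
      by (intro has_sum_level_part[OF lam]) auto
    then show ?case using elim by simp
  qed
  then have "atomic_decomp M F \<phi> T f \<mu> a (level_time lam)"
    unfolding atomic_decomp_def using \<mu>_nn atom by blast
  then show ?thesis unfolding \<mu>_def by blast
qed

lemma Hat_norm_le_control_norm: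
  fixes T :: "('a \<Rightarrow> real) \<Rightarrow> 'a \<Rightarrow> ennreal"
  assumes P: "prob_space M" and Fi: "is_filtration M F" and MO: "musielak_orlicz M \<phi>"
    and f: "f \<in> martingales M F" and r: "0 < r"
    and zero: "\<And>lam. lam \<in> Lambda M F \<Longrightarrow> \<forall>n\<ge>1. AE x in M. X n x \<le> lam (n - 1) x \<Longrightarrow>
        AE x in M. \<forall>i\<ge>1. lam (i - 1) x = 0 \<longrightarrow> f i x = f (i - 1) x"
    and gen: "\<And>lam k. lam \<in> Lambda M F \<Longrightarrow> \<forall>n\<ge>1. AE x in M. X n x \<le> lam (n - 1) x \<Longrightarrow>
        \<exists>G. integrable M G \<and> (\<forall>n. AE x in M. condE M F n G x = level_part lam f k n x)
          \<and> (\<forall>c>0. AE x in M. T (\<lambda>x. G x / c) x \<le> ennreal (3 * two_pow k / c))"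
  shows "Hat_norm M F \<phi> T r f \<le> ennreal (atomic_const r) * control_norm M F \<phi> X"
proof -
  have "Hat_norm M F \<phi> T r f \<le> ennreal (atomic_const r) * mo_norm M \<phi> (lam_inf lam)"
    if lam: "lam \<in> Lambda M F" "\<forall>n\<ge>1. AE x in M. X n x \<le> lam (n - 1) x" for lam
  proof (cases "mo_norm M \<phi> (lam_inf lam) < \<top>")
    case True
    obtain a where "atomic_decomp M F \<phi> T f (level_coeff M \<phi> lam) a (level_time lam)"
      using atomic_decomp_level_coeff[OF P Fi MO f lam(1) True zero[OF lam] gen[OF lam]] by blast
    then have "Hat_norm M F \<phi> T r f \<le> atomic_size M \<phi> r (level_coeff M \<phi> lam) (level_time lam)"
      unfolding Hat_norm_def by (intro Inf_lower) blast
    also have "\<dots> \<le> ennreal (atomic_const r) * mo_norm M \<phi> (lam_inf lam)"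
      by (rule atomic_size_level_coeff_le[OF MO lam(1) r True])
    finally show ?thesis .
  qed (use atomic_const_pos[OF r] in \<open>simp add: not_less top_unique ennreal_mult_top\<close>)
  then have "Hat_norm M F \<phi> T r f \<le> Inf ((\<lambda>y. ennreal (atomic_const r) * y) ` {mo_norm M \<phi> (lam_inf lam) | lam.
      lam \<in> Lambda M F \<and> (\<forall>n\<ge>1. AE x in M. X n x \<le> lam (n - 1) x)})"
    by (intro Inf_greatest) blast
  also have "\<dots> = ennreal (atomic_const r) * control_norm M F \<phi> X"
    unfolding control_norm_def by (rule ennreal_mult_Inf_image[OF atomic_const_pos[OF r]])
  finally show ?thesis .
qed

section \<open>From an atomic decomposition to a control sequence\<close>

lemma Lambda_of_adapted_incseq:
  fixes S :: "nat \<Rightarrow> 'a \<Rightarrow> ennreal"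
  assumes Fi: "is_filtration M F" and meas: "\<And>n. S n \<in> borel_measurable (F n)"
    and mono: "\<And>m n x. m \<le> n \<Longrightarrow> S m x \<le> S n x"
  obtains lam where "lam \<in> Lambda M F" "\<And>n x. ennreal (lam n x) \<le> S n x"
    "\<And>n x. S n x \<noteq> \<top> \<Longrightarrow> ennreal (lam n x) = S n x"
proof
  define h where "h m x = (if S m x < \<top> then enn2real (S m x) else 0)" for m x
  define lam where "lam n x = Max ((\<lambda>m. h m x) ` {..n})" for n x
  have hF: "h m \<in> borel_measurable (F n)" if "m \<le> n" for m n
  proof -
    have [measurable]: "S m \<in> borel_measurable (F n)" by (rule measurable_filtration_mono[OF Fi that meas])
    show ?thesis unfolding h_def by measurable
  qed
  have h_le: "ennreal (h m x) \<le> S m x" for m x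
    unfolding h_def by (cases "S m x < \<top>") (auto simp: less_top)
  have lam_ge: "h m x \<le> lam n x" if "m \<le> n" for m n x
    unfolding lam_def using that by (intro Max_ge) auto
  show le: "ennreal (lam n x) \<le> S n x" for n x
  proof -
    have "lam n x \<in> (\<lambda>m. h m x) ` {..n}" unfolding lam_def by (intro Max_in) auto
    then obtain m where "m \<le> n" "lam n x = h m x" by auto
    then show ?thesis using h_le[of m x] mono[of m n x] by simp
  qed
  show "ennreal (lam n x) = S n x" if "S n x \<noteq> \<top>" for n x
  proof (rule antisym[OF le])
    have "S n x = ennreal (h n x)" unfolding h_def using that by (simp add: less_top)
    also have "\<dots> \<le> ennreal (lam n x)" by (intro ennreal_leI lam_ge) simp
    finally show "S n x \<le> ennreal (lam n x)" .
  qed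
  show "lam \<in> Lambda M F"
    unfolding Lambda_def
  proof (intro CollectI allI conjI ballI)
    fix n
    show "lam n \<in> borel_measurable (F n)"
      unfolding lam_def by (rule borel_measurable_Max) (auto intro: hF)
    fix x
    have "0 \<le> h 0 x" unfolding h_def by simp
    then show "0 \<le> lam n x" using lam_ge[of 0 n x] by linarith
    show "lam n x \<le> lam (Suc n) x" unfolding lam_def by (rule Max_mono) auto
  qed
qed

definition stopped_atomic_sum :: "'a measure \<Rightarrow> ('a \<Rightarrow> real \<Rightarrow> real) \<Rightarrow> (int \<Rightarrow> real) \<Rightarrow> (int \<Rightarrow> 'a \<Rightarrow> enat)
    \<Rightarrow> nat \<Rightarrow> 'a \<Rightarrow> ennreal" where
  "stopped_atomic_sum M \<phi> \<mu> \<nu> n x = (\<Sum>\<^sub>\<infinity>k. ennreal (\<mu> k) * indicator {x\<in>space M. \<nu> k x \<le> enat n} x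
      * inverse (mo_norm M \<phi> (indicator (B_set M (\<nu> k)))))"

lemma control_of_atomic_decomp:
  assumes P: "prob_space M" and Fi: "is_filtration M F" and MO: "musielak_orlicz M \<phi>" and r: "0 < r" "r \<le> 1"
    and st: "\<And>k. is_stopping_time M F (\<nu> k)"
    and fin: "atomic_size M \<phi> r \<mu> \<nu> < \<top>"
    and key: "\<And>n. n \<ge> 1 \<Longrightarrow> AE x in M. ennreal (X n x) \<le> stopped_atomic_sum M \<phi> \<mu> \<nu> (n - 1) x"
  shows "\<exists>lam\<in>Lambda M F. (\<forall>n\<ge>1. AE x in M. X n x \<le> lam (n - 1) x)
    \<and> mo_norm M \<phi> (lam_inf lam) \<le> atomic_size M \<phi> r \<mu> \<nu>"
proof -
  define N where "N k = inverse (mo_norm M \<phi> (indicator (B_set M (\<nu> k))))" for k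
  define C where "C k n = {x\<in>space M. \<nu> k x \<le> enat n}" for k n
  have CF[measurable]: "C k n \<in> sets (F n)" for k n using st[of k] unfolding C_def is_stopping_time_def by auto
  have "\<nu> k x < \<infinity> \<longleftrightarrow> (\<exists>n. \<nu> k x \<le> enat n)" for k x by (cases "\<nu> k x") auto
  then have B_eq: "B_set M (\<nu> k) = (\<Union>n. C k n)" for k unfolding B_set_def C_def by auto
  have [measurable]: "B_set M (\<nu> k) \<in> sets M" for k unfolding B_eq using sets_filtration_M[OF Fi CF] by auto
  define S where "S = stopped_atomic_sum M \<phi> \<mu> \<nu>"
  define Sinf where "Sinf x = (\<Sum>\<^sub>\<infinity>k. ennreal (\<mu> k) * indicator (B_set M (\<nu> k)) x * N k)" for x
  define g where "g x = epow (\<Sum>\<^sub>\<infinity>k. epow (ennreal (\<mu> k) * indicator (B_set M (\<nu> k)) x * N k) r) (1 / r)" for x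
  have size: "atomic_size M \<phi> r \<mu> \<nu> = mo_norm M \<phi> g"
    unfolding atomic_size_def g_def N_def ..
  have SF: "S n \<in> borel_measurable (F n)" for n unfolding S_def stopped_atomic_sum_def C_def[symmetric] by measurable
  have ind_le: "indicator (C k m) x \<le> (indicator (C k n) x :: ennreal)" if "m \<le> n" for k m n x
    using that unfolding C_def by (auto simp: indicator_def intro: order_trans)
  have S_mono: "S m x \<le> S n x" if "m \<le> n" for m n x
    unfolding S_def stopped_atomic_sum_def C_def[symmetric]
    by (intro infsum_ennreal_mono mult_right_mono mult_left_mono ind_le[OF that]) auto
  have S_Sinf: "S n x \<le> Sinf x" for n x
    unfolding S_def stopped_atomic_sum_def Sinf_def C_def[symmetric] N_def[symmetric]
    by (intro infsum_ennreal_mono mult_right_mono mult_left_mono) (auto simp: B_eq indicator_def)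
  have Sinf_g: "Sinf x \<le> g x" for x unfolding Sinf_def g_def by (rule infsum_le_epow_infsum_epow[OF r])
  have "mo_norm M \<phi> Sinf \<le> mo_norm M \<phi> g" using Sinf_g by (intro mo_norm_mono_AE[OF MO]) auto
  then have "mo_norm M \<phi> Sinf < \<top>" using fin size by (simp add: le_less_trans)
  moreover have "Sinf \<in> borel_measurable M" unfolding Sinf_def by measurable
  ultimately have Sinf_fin: "AE x in M. Sinf x \<noteq> \<top>" by (intro AE_finite_if_mo_norm_finite)
  obtain lam where lam: "lam \<in> Lambda M F" "\<And>n x. ennreal (lam n x) \<le> S n x"
    "\<And>n x. S n x \<noteq> \<top> \<Longrightarrow> ennreal (lam n x) = S n x"
    using Lambda_of_adapted_incseq[OF Fi SF S_mono] by blast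
  have "AE x in M. X n x \<le> lam (n - 1) x" if "n \<ge> 1" for n
    using key[OF that] Sinf_fin AE_space
  proof eventually_elim
    case (elim x)
    have "S (n - 1) x \<noteq> \<top>" using S_Sinf[of "n - 1" x] elim by (auto simp: top_unique)
    then have "ennreal (X n x) \<le> ennreal (lam (n - 1) x)" using elim lam(3)[of "n - 1" x] by (simp add: S_def)
    then show ?case using Lambda_nonneg[OF lam(1) elim(3)] by (simp add: ennreal_le_iff)
  qed
  moreover have "mo_norm M \<phi> (lam_inf lam) \<le> mo_norm M \<phi> g"
  proof (intro mo_norm_mono_AE[OF MO] AE_I2)
    show "lam_inf lam x \<le> g x" for x
      using lam(2) S_Sinf Sinf_g unfolding lam_inf_def by (blast intro: SUP_least order_trans)
  qed
  ultimately show ?thesis using lam(1) size by auto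
qed

lemma enat_not_le_pred:
  assumes "n \<ge> 1" "\<not> v \<le> enat (n - 1)"
  shows "enat n \<le> v"
proof -
  have "enat (n - 1) < v" using assms(2) by simp
  then have "eSuc (enat (n - 1)) \<le> v" by (rule ileI1)
  then show ?thesis using assms(1) by (simp add: eSuc_enat)
qed

lemma atomic_decompD:
  assumes "atomic_decomp M F \<phi> T f \<mu> a \<nu>"
  shows "\<And>k. 0 \<le> \<mu> k" "\<And>k. is_stopping_time M F (\<nu> k)"
    "AE x in M. \<forall>k m. enat m \<le> \<nu> k x \<longrightarrow> condE M F m (a k) x = 0"
    "AE x in M. \<forall>k. x \<in> B_set M (\<nu> k) \<longrightarrow> T (a k) x \<le> inverse (mo_norm M \<phi> (indicator (B_set M (\<nu> k))))"
    "AE x in M. \<forall>n. ((\<lambda>k. \<mu> k * condE M F n (a k) x) has_sum f n x) UNIV"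
proof -
  have at: "is_atom M F \<phi> T (a k) (\<nu> k)" for k using assms unfolding atomic_decomp_def by auto
  show "\<And>k. 0 \<le> \<mu> k" using assms unfolding atomic_decomp_def by auto
  show "\<And>k. is_stopping_time M F (\<nu> k)" using at unfolding is_atom_def by auto
  show "AE x in M. \<forall>k m. enat m \<le> \<nu> k x \<longrightarrow> condE M F m (a k) x = 0"
    using at unfolding is_atom_def by (simp add: AE_all_countable)
  show "AE x in M. \<forall>k. x \<in> B_set M (\<nu> k) \<longrightarrow> T (a k) x \<le> inverse (mo_norm M \<phi> (indicator (B_set M (\<nu> k))))"
    using at unfolding is_atom_def by (simp add: AE_all_countable)
  show "AE x in M. \<forall>n. ((\<lambda>k. \<mu> k * condE M F n (a k) x) has_sum f n x) UNIV"
    using assms unfolding atomic_decomp_def by (simp add: AE_all_countable)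
qed

lemma abs_le_stopped_atomic_sum:
  assumes dec: "atomic_decomp M F \<phi> (M_atom M F) f \<mu> a \<nu>" and n: "n \<ge> 1"
  shows "AE x in M. ennreal \<bar>f n x\<bar> \<le> stopped_atomic_sum M \<phi> \<mu> \<nu> (n - 1) x"
  unfolding stopped_atomic_sum_def using atomic_decompD(3,4,5)[OF dec] AE_space
proof eventually_elim
  case (elim x)
  have hs: "((\<lambda>k. \<mu> k * condE M F n (a k) x) has_sum f n x) UNIV" using elim by blast
  have "ennreal (L2_set (\<lambda>_. f n x) {0::nat}) \<le> infsum (\<lambda>k. ennreal (L2_set (\<lambda>_. \<mu> k * condE M F n (a k) x) {0::nat})) UNIV"
    by (rule L2_set_has_sum_le) (use hs in auto)
  then have "ennreal \<bar>f n x\<bar> \<le> infsum (\<lambda>k. ennreal \<bar>\<mu> k * condE M F n (a k) x\<bar>) UNIV"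
    by (simp add: L2_set_def)
  also have "\<dots> \<le> infsum (\<lambda>k. ennreal (\<mu> k) * indicator {x\<in>space M. \<nu> k x \<le> enat (n - 1)} x
        * inverse (mo_norm M \<phi> (indicator (B_set M (\<nu> k))))) UNIV"
  proof (rule infsum_ennreal_mono)
    fix k
    show "ennreal \<bar>\<mu> k * condE M F n (a k) x\<bar> \<le> ennreal (\<mu> k) * indicator {x\<in>space M. \<nu> k x \<le> enat (n - 1)} x
        * inverse (mo_norm M \<phi> (indicator (B_set M (\<nu> k))))"
    proof (cases "\<nu> k x \<le> enat (n - 1)")
      case True
      then have "\<nu> k x < \<infinity>" by (cases "\<nu> k x") auto
      then have xB: "x \<in> B_set M (\<nu> k)" using elim unfolding B_set_def by blast
      have "ennreal \<bar>\<mu> k * condE M F n (a k) x\<bar> = ennreal (\<mu> k) * ennreal \<bar>condE M F n (a k) x\<bar>"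
        using atomic_decompD(1)[OF dec, of k] by (simp add: abs_mult ennreal_mult)
      also have "ennreal \<bar>condE M F n (a k) x\<bar> \<le> M_atom M F (a k) x"
        unfolding M_atom_def by (rule SUP_upper) simp
      also have "\<dots> \<le> inverse (mo_norm M \<phi> (indicator (B_set M (\<nu> k))))" using elim xB by blast
      finally show ?thesis using True elim by (simp add: mult_left_mono)
    next
      case False
      then have "enat n \<le> \<nu> k x" by (rule enat_not_le_pred[OF n])
      then have "condE M F n (a k) x = 0" using elim by blast
      then show ?thesis by simp
    qed
  qed
  finally show ?case .
qed

lemma sqfun_le_stopped_atomic_sum:
  assumes dec: "atomic_decomp M F \<phi> (S_atom M F) f \<mu> a \<nu>" and n: "n \<ge> 1"
  shows "AE x in M. ennreal (sqfun_n f n x) \<le> stopped_atomic_sum M \<phi> \<mu> \<nu> (n - 1) x"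
  unfolding stopped_atomic_sum_def using atomic_decompD(3,4,5)[OF dec] AE_space
proof eventually_elim
  case (elim x)
  define d where "d k i = condE M F i (a k) x - condE M F (i - 1) (a k) x" for k i
  have hs: "((\<lambda>k. \<mu> k * d k i) has_sum (f i x - f (i - 1) x)) UNIV" for i
  proof -
    have h1: "((\<lambda>k. \<mu> k * condE M F i (a k) x) has_sum f i x) UNIV" using elim by blast
    have h2: "((\<lambda>k. - (\<mu> k * condE M F (i - 1) (a k) x)) has_sum - f (i - 1) x) UNIV"
      using elim by (intro has_sum_uminusI) blast
    have "((\<lambda>k. \<mu> k * condE M F i (a k) x + - (\<mu> k * condE M F (i - 1) (a k) x)) has_sum (f i x + - f (i - 1) x)) UNIV"
      by (rule has_sum_add[OF h1 h2])
    then show ?thesis unfolding d_def by (simp add: right_diff_distrib)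
  qed
  have "ennreal (L2_set (\<lambda>i. f i x - f (i - 1) x) {1..n}) \<le> infsum (\<lambda>k. ennreal (L2_set (\<lambda>i. \<mu> k * d k i) {1..n})) UNIV"
    by (rule L2_set_has_sum_le) (use hs in auto)
  then have "ennreal (sqfun_n f n x) \<le> infsum (\<lambda>k. ennreal (L2_set (\<lambda>i. \<mu> k * d k i) {1..n})) UNIV"
    by (simp add: L2_set_def sqfun_n_def)
  also have "\<dots> \<le> infsum (\<lambda>k. ennreal (\<mu> k) * indicator {x\<in>space M. \<nu> k x \<le> enat (n - 1)} x
        * inverse (mo_norm M \<phi> (indicator (B_set M (\<nu> k))))) UNIV"
  proof (rule infsum_ennreal_mono)
    fix k
    have L: "L2_set (\<lambda>i. \<mu> k * d k i) {1..n} = \<mu> k * L2_set (d k) {1..n}"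
      using atomic_decompD(1)[OF dec, of k] by (simp add: L2_set_right_distrib)
    show "ennreal (L2_set (\<lambda>i. \<mu> k * d k i) {1..n}) \<le> ennreal (\<mu> k) * indicator {x\<in>space M. \<nu> k x \<le> enat (n - 1)} x
        * inverse (mo_norm M \<phi> (indicator (B_set M (\<nu> k))))"
    proof (cases "\<nu> k x \<le> enat (n - 1)")
      case True
      then have "\<nu> k x < \<infinity>" by (cases "\<nu> k x") auto
      then have xB: "x \<in> B_set M (\<nu> k)" using elim unfolding B_set_def by blast
      have "ennreal (L2_set (d k) {1..n}) = epow (ennreal (\<Sum>i\<in>{1..n}. (d k i)\<^sup>2)) (1/2)"
        by (simp add: L2_set_def epow_ennreal sum_nonneg powr_half_sqrt)
      also have "(\<Sum>i\<in>{1..n}. (d k i)\<^sup>2) = (\<Sum>j<n. (condE M F (Suc j) (a k) x - condE M F j (a k) x)\<^sup>2)"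
        unfolding d_def using sum_bounds_lt_plus1[of "\<lambda>i. (condE M F i (a k) x - condE M F (i - 1) (a k) x)\<^sup>2" n]
        by simp
      also have "ennreal \<dots> = (\<Sum>j<n. ennreal ((condE M F (Suc j) (a k) x - condE M F j (a k) x)\<^sup>2))"
        by (rule sum_ennreal[symmetric]) simp
      also have "epow \<dots> (1/2) \<le> S_atom M F (a k) x"
        unfolding S_atom_def by (intro epow_mono sum_le_suminf summableI) auto
      also have "\<dots> \<le> inverse (mo_norm M \<phi> (indicator (B_set M (\<nu> k))))" using elim xB by blast
      finally have "ennreal (L2_set (d k) {1..n}) \<le> inverse (mo_norm M \<phi> (indicator (B_set M (\<nu> k))))" .
      then have "ennreal (\<mu> k) * ennreal (L2_set (d k) {1..n}) \<le> ennreal (\<mu> k) * inverse (mo_norm M \<phi> (indicator (B_set M (\<nu> k))))"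
        by (rule mult_left_mono) simp
      then show ?thesis unfolding L using True elim atomic_decompD(1)[OF dec, of k] by (simp add: ennreal_mult)
    next
      case False
      then have ge: "enat n \<le> \<nu> k x" by (rule enat_not_le_pred[OF n])
      have "d k i = 0" if "i \<in> {1..n}" for i
      proof -
        have "enat i \<le> enat n" "enat (i - 1) \<le> enat n" using that by auto
        then have "enat i \<le> \<nu> k x" "enat (i - 1) \<le> \<nu> k x" using ge by (blast intro: order_trans)+
        then show ?thesis unfolding d_def using elim by auto
      qed
      then have "L2_set (d k) {1..n} = 0" by (simp add: L2_set_0')
      then show ?thesis unfolding L by simp
    qed
  qed
  finally show ?case .
qed

lemma control_norm_le_Hat_norm:
  assumes P: "prob_space M" and Fi: "is_filtration M F" and MO: "musielak_orlicz M \<phi>" and r: "0 < r" "r \<le> 1"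
    and key: "\<And>\<mu> a \<nu> n. atomic_decomp M F \<phi> T f \<mu> a \<nu> \<Longrightarrow> n \<ge> 1 \<Longrightarrow>
        AE x in M. ennreal (X n x) \<le> stopped_atomic_sum M \<phi> \<mu> \<nu> (n - 1) x"
  shows "control_norm M F \<phi> X \<le> Hat_norm M F \<phi> T r f"
  unfolding Hat_norm_def
proof (rule Inf_greatest, safe)
  fix \<mu> a \<nu> assume dec: "atomic_decomp M F \<phi> T f \<mu> a \<nu>"
  show "control_norm M F \<phi> X \<le> atomic_size M \<phi> r \<mu> \<nu>"
  proof (cases "atomic_size M \<phi> r \<mu> \<nu> < \<top>")
    case True
    obtain lam where "lam \<in> Lambda M F" "\<forall>n\<ge>1. AE x in M. X n x \<le> lam (n - 1) x"
      "mo_norm M \<phi> (lam_inf lam) \<le> atomic_size M \<phi> r \<mu> \<nu>"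
      using control_of_atomic_decomp[OF P Fi MO r atomic_decompD(2)[OF dec] True key[OF dec]] by blast
    then show ?thesis unfolding control_norm_def by (blast intro: Inf_lower2)
  qed (simp add: top_unique not_less)
qed

section \<open>Equivalence of the quasi-norms\<close>

lemma increment_eq_0_where_abs_control_eq_0:
  assumes f: "f \<in> martingales M F" and lam: "lam \<in> Lambda M F"
    and adm: "\<forall>n\<ge>1. AE x in M. \<bar>f n x\<bar> \<le> lam (n - 1) x"
  shows "AE x in M. \<forall>i\<ge>1. lam (i - 1) x = 0 \<longrightarrow> f i x = f (i - 1) x"
proof -
  have adm': "AE x in M. \<forall>n. n \<ge> 1 \<longrightarrow> \<bar>f n x\<bar> \<le> lam (n - 1) x"
    using adm by (subst AE_all_countable) auto
  show ?thesis using adm' martingalesD(1)[OF f] AE_space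
  proof eventually_elim
    case (elim x)
    show ?case
    proof (intro allI impI)
      fix i :: nat assume i: "i \<ge> 1" "lam (i - 1) x = 0"
      have "\<bar>f i x\<bar> \<le> 0" using elim i by auto
      moreover have "f (i - 1) x = 0"
      proof (cases "i - 1 = 0")
        case True then show ?thesis using elim by simp
      next
        case False
        then have "i - 1 \<ge> 1" by simp
        then have "\<bar>f (i - 1) x\<bar> \<le> lam (i - 1 - 1) x" using elim by blast
        also have "\<dots> \<le> lam (i - 1) x" by (rule Lambda_mono[OF lam]) (use elim in auto)
        finally show ?thesis using i by simp
      qed
      ultimately show "f i x = f (i - 1) x" by simp
    qed
  qed
qed

lemma increment_eq_0_where_sqfun_control_eq_0:
  assumes lam: "lam \<in> Lambda M F"
    and adm: "\<forall>n\<ge>1. AE x in M. sqfun_n f n x \<le> lam (n - 1) x"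
  shows "AE x in M. \<forall>i\<ge>1. lam (i - 1) x = 0 \<longrightarrow> f i x = f (i - 1) x"
proof -
  have adm': "AE x in M. \<forall>n. n \<ge> 1 \<longrightarrow> sqfun_n f n x \<le> lam (n - 1) x"
    using adm by (subst AE_all_countable) auto
  show ?thesis using adm'
  proof eventually_elim
    case (elim x)
    show ?case
    proof (intro allI impI)
      fix i :: nat assume i: "i \<ge> 1" "lam (i - 1) x = 0"
      have s0: "sqfun_n f i x \<le> 0" using elim i by auto
      have nn: "0 \<le> (\<Sum>j\<in>{1..i}. (f j x - f (j - 1) x)\<^sup>2)" by (intro sum_nonneg) simp
      have "(\<Sum>j\<in>{1..i}. (f j x - f (j - 1) x)\<^sup>2) = 0"
        using s0 nn unfolding sqfun_n_def by simp
      moreover have "(f i x - f (i - 1) x)\<^sup>2 \<le> (\<Sum>j\<in>{1..i}. (f j x - f (j - 1) x)\<^sup>2)"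
        using i by (intro member_le_sum) auto
      ultimately show "f i x = f (i - 1) x" by simp
    qed
  qed
qed

lemma Hat_norm_le_P_norm:
  assumes P: "prob_space M" and Fi: "is_filtration M F" and MO: "musielak_orlicz M \<phi>"
    and f: "f \<in> martingales M F" and r: "0 < r"
  shows "Hat_norm M F \<phi> (M_atom M F) r f \<le> ennreal (atomic_const r) * P_norm M F \<phi> f"
  unfolding P_norm_eq_control_norm
proof (rule Hat_norm_le_control_norm[OF P Fi MO f r])
  show "AE x in M. \<forall>i\<ge>1. lam (i - 1) x = 0 \<longrightarrow> f i x = f (i - 1) x"
    if "lam \<in> Lambda M F" "\<forall>n\<ge>1. AE x in M. \<bar>f n x\<bar> \<le> lam (n - 1) x" for lam
    by (rule increment_eq_0_where_abs_control_eq_0[OF f that])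
  show "\<exists>G. integrable M G \<and> (\<forall>n. AE x in M. condE M F n G x = level_part lam f k n x)
      \<and> (\<forall>c>0. AE x in M. M_atom M F (\<lambda>x. G x / c) x \<le> ennreal (3 * two_pow k / c))"
    if "lam \<in> Lambda M F" "\<forall>n\<ge>1. AE x in M. \<bar>f n x\<bar> \<le> lam (n - 1) x" for lam k
    using that by (intro level_part_closable_M[OF P Fi f]) auto
qed

lemma Hat_norm_le_Q_norm:
  assumes P: "prob_space M" and Fi: "is_filtration M F" and MO: "musielak_orlicz M \<phi>"
    and f: "f \<in> martingales M F" and r: "0 < r"
  shows "Hat_norm M F \<phi> (S_atom M F) r f \<le> ennreal (atomic_const r) * Q_norm M F \<phi> f"
  unfolding Q_norm_eq_control_norm
proof (rule Hat_norm_le_control_norm[OF P Fi MO f r])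
  show "AE x in M. \<forall>i\<ge>1. lam (i - 1) x = 0 \<longrightarrow> f i x = f (i - 1) x"
    if "lam \<in> Lambda M F" "\<forall>n\<ge>1. AE x in M. sqfun_n f n x \<le> lam (n - 1) x" for lam
    by (rule increment_eq_0_where_sqfun_control_eq_0[OF that])
  show "\<exists>G. integrable M G \<and> (\<forall>n. AE x in M. condE M F n G x = level_part lam f k n x)
      \<and> (\<forall>c>0. AE x in M. S_atom M F (\<lambda>x. G x / c) x \<le> ennreal (3 * two_pow k / c))"
    if "lam \<in> Lambda M F" "\<forall>n\<ge>1. AE x in M. sqfun_n f n x \<le> lam (n - 1) x" for lam k
    using that by (intro level_part_closable_S[OF P Fi f]) auto
qed

lemma P_norm_le_Hat_norm:
  assumes "prob_space M" "is_filtration M F" "musielak_orlicz M \<phi>" "0 < r" "r \<le> 1"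
  shows "P_norm M F \<phi> f \<le> Hat_norm M F \<phi> (M_atom M F) r f"
  unfolding P_norm_eq_control_norm
  by (rule control_norm_le_Hat_norm[OF assms abs_le_stopped_atomic_sum])

lemma Q_norm_le_Hat_norm:
  assumes "prob_space M" "is_filtration M F" "musielak_orlicz M \<phi>" "0 < r" "r \<le> 1"
  shows "Q_norm M F \<phi> f \<le> Hat_norm M F \<phi> (S_atom M F) r f"
  unfolding Q_norm_eq_control_norm
  by (rule control_norm_le_Hat_norm[OF assms sqfun_le_stopped_atomic_sum])

lemma equivalent_quasi_norms:
  fixes A B :: "'b \<Rightarrow> ennreal"
  assumes C: "C > 0" and AB: "\<And>f. f \<in> S \<Longrightarrow> A f \<le> ennreal C * B f" and BA: "\<And>f. f \<in> S \<Longrightarrow> B f \<le> A f"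
  shows "{f\<in>S. B f < \<infinity>} = {f\<in>S. A f < \<infinity>}
    \<and> (\<exists>C>0. \<forall>f\<in>S. A f \<le> ennreal C * B f \<and> B f \<le> ennreal C * A f)"
proof
  have "ennreal C * y \<le> ennreal (max C 1) * y" "y \<le> ennreal (max C 1) * y" for y
    using mult_right_mono[of "ennreal C" "ennreal (max C 1)" y] mult_right_mono[of 1 "ennreal (max C 1)" y]
    by (simp_all add: ennreal_leI)
  then have "A f \<le> ennreal (max C 1) * B f \<and> B f \<le> ennreal (max C 1) * A f" if "f \<in> S" for f
    using AB[OF that] BA[OF that] by (blast intro: order_trans)
  then show "\<exists>C>0. \<forall>f\<in>S. A f \<le> ennreal C * B f \<and> B f \<le> ennreal C * A f"
    by (intro exI[of _ "max C 1"]) auto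
  have "A f < \<infinity>" if "f \<in> S" "B f < \<infinity>" for f
  proof -
    have "ennreal C * B f < \<infinity>" using that(2) by (simp add: ennreal_mult_less_top infinity_ennreal_def)
    with AB[OF that(1)] show ?thesis by (simp add: infinity_ennreal_def le_less_trans)
  qed
  then show "{f\<in>S. B f < \<infinity>} = {f\<in>S. A f < \<infinity>}"
    using BA by (auto intro: le_less_trans)
qed

theorem theorem4p4:
  fixes M :: "'a measure" and F :: "nat \<Rightarrow> 'a measure" and \<phi> :: "'a \<Rightarrow> real \<Rightarrow> real"
  assumes "prob_space M"
    and "is_filtration M F"
    and "musielak_orlicz M \<phi>"
  shows "\<forall>r\<in>{0<..1}.
     (P_space M F \<phi> = Hat_space M F \<phi> (M_atom M F) r \<and>
      (\<exists>C::real. C > 0 \<and> (\<forall>f\<in>martingales M F.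
          Hat_norm M F \<phi> (M_atom M F) r f \<le> ennreal C * P_norm M F \<phi> f \<and>
          P_norm M F \<phi> f \<le> ennreal C * Hat_norm M F \<phi> (M_atom M F) r f)))
   \<and> (Q_space M F \<phi> = Hat_space M F \<phi> (S_atom M F) r \<and>
      (\<exists>C::real. C > 0 \<and> (\<forall>f\<in>martingales M F.
          Hat_norm M F \<phi> (S_atom M F) r f \<le> ennreal C * Q_norm M F \<phi> f \<and>
          Q_norm M F \<phi> f \<le> ennreal C * Hat_norm M F \<phi> (S_atom M F) r f)))"
  apply (intro ballI)
  subgoal premises r_range for r
  proof -
    have r: "0 < r" "r \<le> 1" using r_range by auto
    note P_equiv = equivalent_quasi_norms[OF atomic_const_pos[OF r(1)] Hat_norm_le_P_norm[OF assms _ r(1)]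
        P_norm_le_Hat_norm[OF assms r]]
    note Q_equiv = equivalent_quasi_norms[OF atomic_const_pos[OF r(1)] Hat_norm_le_Q_norm[OF assms _ r(1)]
        Q_norm_le_Hat_norm[OF assms r]]
    show ?thesis
      unfolding P_space_def Q_space_def Hat_space_def by (rule conjI[OF P_equiv Q_equiv])
  qed
  done

end
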